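(* Let $M$ be a term of the language $\mathbf{PCF}^{\mathbf{list}}$ such that $x_1:\mathtt{bit},\ldots,x_n:\mathtt{bit}\vdash M:\mathtt{bit}^m$ is derivable. Suppose that $$\mathit{EmptyAM}(M)\;\to_{am}^*\;(\langle p_{i_1},\ldots,p_{i_k}\rangle,\ (I,C),\ L),$$ where $p_{i_1},\ldots,p_{i_k}$ are variables. Then $k=m$, and for every family of booleans $\vec u=(b_i)_{i\in I}$ (where $I=\{1,\ldots,n\}$) and all booleans $c_1,\ldots,c_m$: the term $T(\langle p_{i_1},\ldots,p_{i_k}\rangle,(I,C),L)(\vec u)$ is equal to $\langle c_1,\ldots,c_m\rangle$ if and only if the term $\mathtt{let}\ \langle x_1,\ldots,x_n\rangle=\langle b_1,\ldots,b_n\rangle\ \mathtt{in}\ M$ reduces (in zero or more steps of the small-step relation $\to$) to $\langle c_1,\ldots,c_m\rangle$.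
   Context: **Language $\mathbf{PCF}^{\mathbf{list}}$.** Terms: $M,N,P::= x \mid \lambda x.M \mid MN \mid \langle M,N\rangle \mid \pi_1(M)\mid\pi_2(M)\mid \mathtt{skip}\mid \mathtt{let}\ \mathtt{skip}=M\ \mathtt{in}\ N \mid \mathtt{tt}\mid\mathtt{ff}\mid \mathtt{if}\ M\ \mathtt{then}\ N\ \mathtt{else}\ P \mid \mathtt{and}\mid\mathtt{xor}\mid\mathtt{not}\mid \mathtt{inj}_1(M)\mid\mathtt{inj}_2(M)\mid \mathtt{match}\ P\ \mathtt{with}\ (x\mapsto M\mid y\mapsto N)\mid \mathtt{split}\mid Y(M)\mid \mathtt{Err}$. Types: $A,B::=\mathtt{bit}\mid A\oplus B\mid A\times B\mid \mathbf 1\mid A\to B\mid [A]$. Typing rules (context $\Delta$): $\Delta,x:A\vdash x:A$; $\mathtt{tt},\mathtt{ff}:\mathtt{bit}$; $\mathtt{skip}:\mathbf 1$; $\mathtt{Err}:A$ for any $A$; $\mathtt{not}:\mathtt{bit}\to\mathtt{bit}$; $\mathtt{and},\mathtt{xor}:\mathtt{bit}\times\mathtt{bit}\to\mathtt{bit}$; $\mathtt{split}:[A]\to\mathbf 1\oplus(A\times[A])$; the usual rules for $\lambda$, application, pairs, projections, injections, $\mathtt{let}\ \mathtt{skip}$ (first argument of type $\mathbf 1$), and $\mathtt{match}$ (on $P:A\oplus B$, branches typed with $x:A$ resp. $y:B$); if $\Delta\vdash M:\mathbf 1\oplus(A\times[A])$ then $\Delta\vdash M:[A]$; if $\Delta\vdash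 M:A\to A$ then $\Delta\vdash Y(M):A$; $\mathtt{if}\ P\ \mathtt{then}\ M\ \mathtt{else}\ N : C$ when $P:\mathtt{bit}$, $M,N:C$ and $C$ is first-order, i.e. generated by $C::=\mathtt{bit}\mid C\times C\mid [C]$. Notation: $\mathtt{nil}=\mathtt{inj}_1(\mathtt{skip})$, $M::N=\mathtt{inj}_2\langle M,N\rangle$, $[M_1,\ldots,M_n]=M_1::(\cdots::(M_n::\mathtt{nil}))$, $\langle M_1,\ldots,M_n\rangle=\langle M_1,\langle\ldots,M_n\rangle\rangle$ with the corresponding $n$-ary projections $\pi_i$; $\mathtt{bit}^m$ is the $m$-fold (right-nested) product of $\mathtt{bit}$; $\mathtt{let}\ x=N\ \mathtt{in}\ M$ is $(\lambda x.M)N$; $\mathtt{let}\ \langle x_1,\ldots,x_n\rangle=N\ \mathtt{in}\ M$ is $\mathtt{let}\ z=N\ \mathtt{in}\ \mathtt{let}\ x_1=\pi_1(z)\ \mathtt{in}\cdots\mathtt{let}\ x_n=\pi_n(z)\ \mathtt{in}\ M$ with $z$ fresh. **Small-step semantics $\to$:** the smallest relation closed under arbitrary subterm contexts containing $(\lambda x.M)N\to M[N/x]$; $\pi_i\langle M_1,M_2\rangle\to M_i$; $\mathtt{let}\ \mathtt{skip}=\mathtt{skip}\ \mathtt{in}\ M\to M$; $\mathtt{if}\ \mathtt{tt}\ \mathtt{then}\ M\ \mathtt{else}\ N\to M$; $\mathtt{if}\ \mathtt{ff}\ \mathtt{then}\ M\ \mathtt{else}\ N\to N$; $\mathtt{split}\,M\to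 M$; $\mathtt{match}\ \mathtt{inj}_i(P)\ \mathtt{with}\ (x_1\mapsto M_1\mid x_2\mapsto M_2)\to M_i[P/x_i]$; $Y(M)\to M(Y(M))$; and the evident rules computing $\mathtt{not},\mathtt{and},\mathtt{xor}$ on the constants $\mathtt{tt},\mathtt{ff}$ (e.g. $\mathtt{not}\ \mathtt{tt}\to\mathtt{ff}$). $\mathtt{Err}$ does not reduce. **Reversible circuits.** A gate is $\mathrm{cnot}_i(b_1^{j_1}\ldots b_r^{j_r})$ with $i,j_1,\ldots,j_r$ natural numbers, $i\neq j_k$, $b_k$ booleans (written $\mathrm{not}_i$ if $r=0$); its wires are $\{i,j_1,\ldots,j_r\}$; $\mathrm{wires}(C)$ is the union of the wires of the gates of a list $C$. A circuit is $(I,C,O)$ with $C$ a list of gates and $I,O$ sets of wires. Executing gate $\mathrm{cnot}_i(b_1^{j_1}\ldots b_r^{j_r})$ on a valuation $v$ (a boolean per wire) gives $w$ with $w_l=v_l$ for $l\neq i$ and $w_i=v_i\ \mathtt{xor}\ \bigwedge_{k}(v_{j_k}\ \mathtt{xor}\ b_k\ \mathtt{xor}\ \mathtt{tt})$ (and $w_i=\mathtt{not}(v_i)$ if $r=0$). Executing $(I,C,O)$ on inputs $(x_i)_{i\in I}$: initialize $v_k=x_k$ for $k\in I$ and $v_k=\mathtt{ff}$ for all other wires, execute the gates of $C$ in reverse list order, and return $(v_k)_{k\in O}$. **Abstract machines.** A circuit-generating abstract machine is a triple $(M,(I,C),L)$ where $p_1:\mathtt{bit},\ldots,p_{n+k}:\mathtt{bit}\vdash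 M:\mathtt{bit}^m$, $I=\{1,\ldots,n\}$, $C$ is a list of gates, and $L$ is a one-to-one map from the free variables of $M$ onto wires in $\mathrm{wires}(C)\cup I$. For $x_1:\mathtt{bit},\ldots,x_n:\mathtt{bit}\vdash M:\mathtt{bit}^m$, $\mathit{EmptyAM}(M)=(M,(\{1,\ldots,n\},[\,]),\{x_i\mapsto i\})$. A first-order extension of $L$ is a term built from variables of the domain of $L$ by tuples $\langle\ldots\rangle$ and list literals $[\ldots]$; two such have the same shape if both are tuples of the same size or both lists of the same length with componentwise same shape (variables having the same shape). Beta-contexts $E[-]$ are one-hole contexts whose hole may be in any immediate subterm position of any term constructor (under $\lambda$, either side of application, pairs, projections, $\mathtt{let}\ \mathtt{skip}$, any of the three arguments of $\mathtt{if}$, injections, any of the three parts of $\mathtt{match}$, $Y$). The relation $\to_{am}$ is: $(E[R],RC,L)\to_{am}(E[R'],RC,L)$ for each of the rules $(\lambda x.M)N\mapsto M[N/x]$, $\pi_i\langle M_1,M_2\rangle\mapsto M_i$, $\mathtt{let}\ \mathtt{skip}=\mathtt{skip}\ \mathtt{in}\ M\mapsto M$, $\mathtt{split}\,M\mapsto M$, $\mathtt{match}\ \mathtt{inj}_i(P)\ldots\mapsto M_i[P/x_i]$, $Y(M)\mapsto M(Y(M))$; and the boolean rules, where $i_0$ is a new wire, $p_{i_0}$ a fresh variable, $L'=L\cup\{p_{i_0}\mapsto i_0\}$, and $G::(I,C)$ means $(I,G::C)$: $(E[\mathtt{ff}],RC,L)\to_{am}(E[p_{i_0}],RC,L')$;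 $(E[\mathtt{tt}],RC,L)\to_{am}(E[p_{i_0}],\mathrm{not}_{i_0}::RC,L')$; $(E[\mathtt{not}\ p_i],RC,L)\to_{am}(E[p_{i_0}],\mathrm{cnot}_{i_0}(\mathtt{ff}^{L(p_i)})::RC,L')$; $(E[\mathtt{and}\ p_i\ p_j],RC,L)\to_{am}(E[p_{i_0}],\mathrm{cnot}_{i_0}(\mathtt{tt}^{L(p_i)}\mathtt{tt}^{L(p_j)})::RC,L')$; $(E[\mathtt{xor}\ p_i\ p_j],RC,L)\to_{am}(E[p_{i_0}],\mathrm{cnot}_{i_0}(\mathtt{tt}^{L(p_i)})::\mathrm{cnot}_{i_0}(\mathtt{tt}^{L(p_j)})::RC,L')$; and for first-order extensions $V,W$ of $L$: if $V,W$ have the same shape, $(E[\mathtt{if}\ p_i\ \mathtt{then}\ V\ \mathtt{else}\ W],RC,L)\to_{am}(E[U],RC',L'')$ where $U$ has the same shape, its variables $u_1,\ldots,u_r$ are fresh, pairwise distinct and mapped by $L''\supseteq L$ to new distinct wires, and, writing $v_1,\ldots,v_r$ and $w_1,\ldots,w_r$ for the corresponding variables of $V$ and $W$, $RC'$ is $RC$ with the gates $\mathrm{cnot}_{u_j}(\mathtt{tt}^{p_i}\mathtt{tt}^{v_j})$ and $\mathrm{cnot}_{u_j}(\mathtt{ff}^{p_i}\mathtt{tt}^{w_j})$ added (variables standing for their wires); otherwise it steps to $E[\mathtt{Err}]$. **Readback.** For a machine $(M,(I,C),L)$ and $\vec u=(u_i)_{i\in I}$, let $v$ be the final valuation of executing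 the circuit $(I,C,\mathrm{Range}(L))$ on $\vec u$; $T(M,(I,C),L)(\vec u)$ is $M$ with each free variable $x$ replaced by the boolean constant $v_{L(x)}$. *)

theory Defs
  imports Main
begin

datatype ty = Bit | Sum ty ty | Prod ty ty | Unit | Arr ty ty | List ty

inductive first_order :: "ty \<Rightarrow> bool" where
  "first_order Bit"
| "first_order A \<Longrightarrow> first_order B \<Longrightarrow> first_order (Prod A B)"
| "first_order A \<Longrightarrow> first_order (List A)"

text \<open>Terms: bound variables are de Bruijn indices (TVar), free variables are
  named by natural numbers (TFV).  TLam binds index 0 in its body; TMatch P M N binds
  index 0 in M and in N.\<close>
datatype trm =
    TVar nat | TFV nat | TLam trm | TApp trm trm | TPair trm trm | TFst trm | TSnd trm
  | TSkip | TLetSkip trm trm | Tt | Ff | TIf trm trm trm | TAnd | TXor | TNot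
  | TInj1 trm | TInj2 trm | TMatch trm trm trm | TSplit | TY trm | TErr

fun lift :: "nat \<Rightarrow> trm \<Rightarrow> trm" where
  "lift c (TVar k) = (if k < c then TVar k else TVar (Suc k))"
| "lift c (TFV x) = TFV x"
| "lift c (TLam M) = TLam (lift (Suc c) M)"
| "lift c (TApp M N) = TApp (lift c M) (lift c N)"
| "lift c (TPair M N) = TPair (lift c M) (lift c N)"
| "lift c (TFst M) = TFst (lift c M)"
| "lift c (TSnd M) = TSnd (lift c M)"
| "lift c TSkip = TSkip"
| "lift c (TLetSkip M N) = TLetSkip (lift c M) (lift c N)"
| "lift c Tt = Tt"
| "lift c Ff = Ff"
| "lift c (TIf P M N) = TIf (lift c P) (lift c M) (lift c N)"
| "lift c TAnd = TAnd"
| "lift c TXor = TXor"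
| "lift c TNot = TNot"
| "lift c (TInj1 M) = TInj1 (lift c M)"
| "lift c (TInj2 M) = TInj2 (lift c M)"
| "lift c (TMatch P M N) = TMatch (lift c P) (lift (Suc c) M) (lift (Suc c) N)"
| "lift c TSplit = TSplit"
| "lift c (TY M) = TY (lift c M)"
| "lift c TErr = TErr"

fun subst :: "trm \<Rightarrow> nat \<Rightarrow> trm \<Rightarrow> trm" where
  "subst (TVar i) k s = (if k < i then TVar (i - 1) else if i = k then s else TVar i)"
| "subst (TFV x) k s = TFV x"
| "subst (TLam M) k s = TLam (subst M (Suc k) (lift 0 s))"
| "subst (TApp M N) k s = TApp (subst M k s) (subst N k s)"
| "subst (TPair M N) k s = TPair (subst M k s) (subst N k s)"
| "subst (TFst M) k s = TFst (subst M k s)"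
| "subst (TSnd M) k s = TSnd (subst M k s)"
| "subst TSkip k s = TSkip"
| "subst (TLetSkip M N) k s = TLetSkip (subst M k s) (subst N k s)"
| "subst Tt k s = Tt"
| "subst Ff k s = Ff"
| "subst (TIf P M N) k s = TIf (subst P k s) (subst M k s) (subst N k s)"
| "subst TAnd k s = TAnd"
| "subst TXor k s = TXor"
| "subst TNot k s = TNot"
| "subst (TInj1 M) k s = TInj1 (subst M k s)"
| "subst (TInj2 M) k s = TInj2 (subst M k s)"
| "subst (TMatch P M N) k s =
     TMatch (subst P k s) (subst M (Suc k) (lift 0 s)) (subst N (Suc k) (lift 0 s))"
| "subst TSplit k s = TSplit"
| "subst (TY M) k s = TY (subst M k s)"
| "subst TErr k s = TErr"

text \<open>Abstraction of the named free variable x (turning a named binder into de Bruijn).\<close>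
fun close :: "nat \<Rightarrow> nat \<Rightarrow> trm \<Rightarrow> trm" where
  "close x d (TVar k) = (if k < d then TVar k else TVar (Suc k))"
| "close x d (TFV y) = (if y = x then TVar d else TFV y)"
| "close x d (TLam M) = TLam (close x (Suc d) M)"
| "close x d (TApp M N) = TApp (close x d M) (close x d N)"
| "close x d (TPair M N) = TPair (close x d M) (close x d N)"
| "close x d (TFst M) = TFst (close x d M)"
| "close x d (TSnd M) = TSnd (close x d M)"
| "close x d TSkip = TSkip"
| "close x d (TLetSkip M N) = TLetSkip (close x d M) (close x d N)"
| "close x d Tt = Tt"
| "close x d Ff = Ff"
| "close x d (TIf P M N) = TIf (close x d P) (close x d M) (close x d N)"
| "close x d TAnd = TAnd"
| "close x d TXor = TXor"
| "close x d TNot = TNot"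
| "close x d (TInj1 M) = TInj1 (close x d M)"
| "close x d (TInj2 M) = TInj2 (close x d M)"
| "close x d (TMatch P M N) = TMatch (close x d P) (close x (Suc d) M) (close x (Suc d) N)"
| "close x d TSplit = TSplit"
| "close x d (TY M) = TY (close x d M)"
| "close x d TErr = TErr"

fun subst_fv :: "(nat \<Rightarrow> trm) \<Rightarrow> trm \<Rightarrow> trm" where
  "subst_fv f (TVar k) = TVar k"
| "subst_fv f (TFV y) = f y"
| "subst_fv f (TLam M) = TLam (subst_fv f M)"
| "subst_fv f (TApp M N) = TApp (subst_fv f M) (subst_fv f N)"
| "subst_fv f (TPair M N) = TPair (subst_fv f M) (subst_fv f N)"
| "subst_fv f (TFst M) = TFst (subst_fv f M)"
| "subst_fv f (TSnd M) = TSnd (subst_fv f M)"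
| "subst_fv f TSkip = TSkip"
| "subst_fv f (TLetSkip M N) = TLetSkip (subst_fv f M) (subst_fv f N)"
| "subst_fv f Tt = Tt"
| "subst_fv f Ff = Ff"
| "subst_fv f (TIf P M N) = TIf (subst_fv f P) (subst_fv f M) (subst_fv f N)"
| "subst_fv f TAnd = TAnd"
| "subst_fv f TXor = TXor"
| "subst_fv f TNot = TNot"
| "subst_fv f (TInj1 M) = TInj1 (subst_fv f M)"
| "subst_fv f (TInj2 M) = TInj2 (subst_fv f M)"
| "subst_fv f (TMatch P M N) = TMatch (subst_fv f P) (subst_fv f M) (subst_fv f N)"
| "subst_fv f TSplit = TSplit"
| "subst_fv f (TY M) = TY (subst_fv f M)"
| "subst_fv f TErr = TErr"

definition bconst :: "bool \<Rightarrow> trm" where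
  "bconst b = (if b then Tt else Ff)"

fun tuple :: "trm list \<Rightarrow> trm" where
  "tuple [] = TSkip"
| "tuple [M] = M"
| "tuple (M # Ms) = TPair M (tuple Ms)"

fun bitpow :: "nat \<Rightarrow> ty" where
  "bitpow 0 = Unit"
| "bitpow (Suc 0) = Bit"
| "bitpow (Suc (Suc k)) = Prod Bit (bitpow (Suc k))"

text \<open>i-th projection (1 \<le> i \<le> n) out of a right-nested n-tuple.\<close>
definition proj :: "nat \<Rightarrow> nat \<Rightarrow> trm \<Rightarrow> trm" where
  "proj n i z = (if i = n then (TSnd ^^ (n - 1)) z else TFst ((TSnd ^^ (i - 1)) z))"

definition mklet :: "nat \<Rightarrow> trm \<Rightarrow> trm \<Rightarrow> trm" where
  "mklet x N M = TApp (TLam (close x 0 M)) N"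

text \<open>let <x_1,...,x_n> = <b_1,...,b_n> in M, with x_i the free variable named i
  and the auxiliary fresh variable z named 0.\<close>
definition let_tuple :: "nat \<Rightarrow> bool list \<Rightarrow> trm \<Rightarrow> trm" where
  "let_tuple n bs M =
     mklet 0 (tuple (map bconst bs))
       (foldr (\<lambda>i acc. mklet i (proj n i (TFV 0)) acc) [1..<Suc n] M)"

inductive typing :: "(nat \<Rightarrow> ty option) \<Rightarrow> ty list \<Rightarrow> trm \<Rightarrow> ty \<Rightarrow> bool" where
  t_fv: "D x = Some A \<Longrightarrow> typing D G (TFV x) A"
| t_var: "i < length G \<Longrightarrow> typing D G (TVar i) (G ! i)"
| t_lam: "typing D (A # G) M B \<Longrightarrow> typing D G (TLam M) (Arr A B)"
| t_app: "typing D G M (Arr A B) \<Longrightarrow> typing D G N A \<Longrightarrow> typing D G (TApp M N) B"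
| t_pair: "typing D G M A \<Longrightarrow> typing D G N B \<Longrightarrow> typing D G (TPair M N) (Prod A B)"
| t_fst: "typing D G M (Prod A B) \<Longrightarrow> typing D G (TFst M) A"
| t_snd: "typing D G M (Prod A B) \<Longrightarrow> typing D G (TSnd M) B"
| t_skip: "typing D G TSkip Unit"
| t_letskip: "typing D G M Unit \<Longrightarrow> typing D G N C \<Longrightarrow> typing D G (TLetSkip M N) C"
| t_tt: "typing D G Tt Bit"
| t_ff: "typing D G Ff Bit"
| t_if: "typing D G P Bit \<Longrightarrow> typing D G M C \<Longrightarrow> typing D G N C \<Longrightarrow> first_order C
         \<Longrightarrow> typing D G (TIf P M N) C"
| t_and: "typing D G TAnd (Arr (Prod Bit Bit) Bit)"
| t_xor: "typing D G TXor (Arr (Prod Bit Bit) Bit)"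
| t_not: "typing D G TNot (Arr Bit Bit)"
| t_inj1: "typing D G M A \<Longrightarrow> typing D G (TInj1 M) (Sum A B)"
| t_inj2: "typing D G M B \<Longrightarrow> typing D G (TInj2 M) (Sum A B)"
| t_match: "typing D G P (Sum A B) \<Longrightarrow> typing D (A # G) M C \<Longrightarrow> typing D (B # G) N C
         \<Longrightarrow> typing D G (TMatch P M N) C"
| t_split: "typing D G TSplit (Arr (List A) (Sum Unit (Prod A (List A))))"
| t_fold: "typing D G M (Sum Unit (Prod A (List A))) \<Longrightarrow> typing D G M (List A)"
| t_Y: "typing D G M (Arr A A) \<Longrightarrow> typing D G (TY M) A"
| t_err: "typing D G TErr A"

text \<open>The context x_1:bit,...,x_n:bit, where x_i is the free variable named i.\<close>
definition bit_ctx :: "nat \<Rightarrow> nat \<Rightarrow> ty option" where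
  "bit_ctx n x = (if 1 \<le> x \<and> x \<le> n then Some Bit else None)"

datatype ctx =
    Hole | CLam ctx | CAppL ctx trm | CAppR trm ctx | CPairL ctx trm | CPairR trm ctx
  | CFst ctx | CSnd ctx | CLetL ctx trm | CLetR trm ctx
  | CIf1 ctx trm trm | CIf2 trm ctx trm | CIf3 trm trm ctx | CInj1 ctx | CInj2 ctx
  | CMatch1 ctx trm trm | CMatch2 trm ctx trm | CMatch3 trm trm ctx | CY ctx

fun plug :: "ctx \<Rightarrow> trm \<Rightarrow> trm" where
  "plug Hole R = R"
| "plug (CLam E) R = TLam (plug E R)"
| "plug (CAppL E N) R = TApp (plug E R) N"
| "plug (CAppR M E) R = TApp M (plug E R)"
| "plug (CPairL E N) R = TPair (plug E R) N"
| "plug (CPairR M E) R = TPair M (plug E R)"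
| "plug (CFst E) R = TFst (plug E R)"
| "plug (CSnd E) R = TSnd (plug E R)"
| "plug (CLetL E N) R = TLetSkip (plug E R) N"
| "plug (CLetR M E) R = TLetSkip M (plug E R)"
| "plug (CIf1 E M N) R = TIf (plug E R) M N"
| "plug (CIf2 P E N) R = TIf P (plug E R) N"
| "plug (CIf3 P M E) R = TIf P M (plug E R)"
| "plug (CInj1 E) R = TInj1 (plug E R)"
| "plug (CInj2 E) R = TInj2 (plug E R)"
| "plug (CMatch1 E M N) R = TMatch (plug E R) M N"
| "plug (CMatch2 P E N) R = TMatch P (plug E R) N"
| "plug (CMatch3 P M E) R = TMatch P M (plug E R)"
| "plug (CY E) R = TY (plug E R)"

text \<open>Rules shared by the small-step semantics and the abstract machine.\<close>
inductive base_red :: "trm \<Rightarrow> trm \<Rightarrow> bool" where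
  "base_red (TApp (TLam M) N) (subst M 0 N)"
| "base_red (TFst (TPair M1 M2)) M1"
| "base_red (TSnd (TPair M1 M2)) M2"
| "base_red (TLetSkip TSkip M) M"
| "base_red (TApp TSplit M) M"
| "base_red (TMatch (TInj1 P) M1 M2) (subst M1 0 P)"
| "base_red (TMatch (TInj2 P) M1 M2) (subst M2 0 P)"
| "base_red (TY M) (TApp M (TY M))"

inductive bool_red :: "trm \<Rightarrow> trm \<Rightarrow> bool" where
  "bool_red (TIf Tt M N) M"
| "bool_red (TIf Ff M N) N"
| "bool_red (TApp TNot (bconst a)) (bconst (\<not> a))"
| "bool_red (TApp TAnd (TPair (bconst a) (bconst b))) (bconst (a \<and> b))"
| "bool_red (TApp TXor (TPair (bconst a) (bconst b))) (bconst (a \<noteq> b))"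

inductive step :: "trm \<Rightarrow> trm \<Rightarrow> bool" where
  "base_red R R' \<or> bool_red R R' \<Longrightarrow> step (plug E R) (plug E R')"

section \<open>Reversible circuits\<close>

text \<open>Cnot i [(b_1,j_1),...,(b_r,j_r)] is the gate cnot_i(b_1^{j_1} ... b_r^{j_r});
  not_i is Cnot i [].\<close>
datatype gate = Cnot nat "(bool \<times> nat) list"

fun gate_wires :: "gate \<Rightarrow> nat set" where
  "gate_wires (Cnot i cs) = insert i (snd ` set cs)"

definition wires :: "gate list \<Rightarrow> nat set" where
  "wires C = (\<Union>g\<in>set C. gate_wires g)"

text \<open>xor on booleans is \<noteq>.\<close>
fun exec_gate :: "gate \<Rightarrow> (nat \<Rightarrow> bool) \<Rightarrow> (nat \<Rightarrow> bool)" where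
  "exec_gate (Cnot i cs) v =
     v(i := (v i \<noteq> (\<forall>(b, j) \<in> set cs. ((v j \<noteq> b) \<noteq> True))))"

text \<open>Final valuation: initialise inputs from u, other wires to ff, and execute the
  gates in reverse list order.\<close>
definition run_circuit :: "nat set \<Rightarrow> gate list \<Rightarrow> (nat \<Rightarrow> bool) \<Rightarrow> (nat \<Rightarrow> bool)" where
  "run_circuit I C u = foldr exec_gate C (\<lambda>k. if k \<in> I then u k else False)"

section \<open>Abstract machine\<close>

type_synonym amstate = "trm \<times> (nat set \<times> gate list) \<times> (nat \<Rightarrow> nat option)"

definition EmptyAM :: "nat \<Rightarrow> trm \<Rightarrow> amstate" where
  "EmptyAM n M = (M, ({1..n}, []), (\<lambda>x. if x \<in> {1..n} then Some x else None))"

definition new_wire :: "nat set \<Rightarrow> gate list \<Rightarrow> (nat \<Rightarrow> nat option) \<Rightarrow> nat \<Rightarrow> bool" where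
  "new_wire I C L w \<longleftrightarrow> w \<notin> I \<and> w \<notin> wires C \<and> w \<notin> ran L"

fun fvars :: "trm \<Rightarrow> nat list" where
  "fvars (TVar k) = []"
| "fvars (TFV y) = [y]"
| "fvars (TLam M) = fvars M"
| "fvars (TApp M N) = fvars M @ fvars N"
| "fvars (TPair M N) = fvars M @ fvars N"
| "fvars (TFst M) = fvars M"
| "fvars (TSnd M) = fvars M"
| "fvars TSkip = []"
| "fvars (TLetSkip M N) = fvars M @ fvars N"
| "fvars Tt = []"
| "fvars Ff = []"
| "fvars (TIf P M N) = fvars P @ fvars M @ fvars N"
| "fvars TAnd = []"
| "fvars TXor = []"
| "fvars TNot = []"
| "fvars (TInj1 M) = fvars M"
| "fvars (TInj2 M) = fvars M"
| "fvars (TMatch P M N) = fvars P @ fvars M @ fvars N"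
| "fvars TSplit = []"
| "fvars (TY M) = fvars M"
| "fvars TErr = []"

text \<open>Terms built from free variables by tuples and list literals
  (nil = inj1 skip, V :: W = inj2 <V, W>).\<close>
inductive fo_term :: "trm \<Rightarrow> bool" and fo_list :: "trm \<Rightarrow> bool" where
  "fo_term (TFV x)"
| "fo_term V \<Longrightarrow> fo_term W \<Longrightarrow> fo_term (TPair V W)"
| "fo_list V \<Longrightarrow> fo_term V"
| "fo_list (TInj1 TSkip)"
| "fo_term V \<Longrightarrow> fo_list W \<Longrightarrow> fo_list (TInj2 (TPair V W))"

definition fo_ext :: "(nat \<Rightarrow> nat option) \<Rightarrow> trm \<Rightarrow> bool" where
  "fo_ext L V \<longleftrightarrow> fo_term V \<and> set (fvars V) \<subseteq> dom L"

definition shape :: "trm \<Rightarrow> trm" where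
  "shape V = subst_fv (\<lambda>_. TFV 0) V"

definition same_shape :: "trm \<Rightarrow> trm \<Rightarrow> bool" where
  "same_shape V W \<longleftrightarrow> shape V = shape W"

text \<open>Gates added by the if-rule: for each triple (u_j, v_j, w_j) of wires,
  cnot_{u_j}(tt^{p} tt^{v_j}) and cnot_{u_j}(ff^{p} tt^{w_j}).\<close>
definition if_gates :: "nat \<Rightarrow> (nat \<times> nat \<times> nat) list \<Rightarrow> gate list" where
  "if_gates p uvw = concat (map (\<lambda>(u, v, w). [Cnot u [(True, p), (True, v)],
                                              Cnot u [(False, p), (True, w)]]) uvw)"

inductive am_step :: "amstate \<Rightarrow> amstate \<Rightarrow> bool" where
  am_base: "base_red R R' \<Longrightarrow> am_step (plug E R, RC, L) (plug E R', RC, L)"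
| am_ff: "new_wire I C L w \<Longrightarrow> L p = None \<Longrightarrow>
    am_step (plug E Ff, (I, C), L) (plug E (TFV p), (I, C), L(p \<mapsto> w))"
| am_tt: "new_wire I C L w \<Longrightarrow> L p = None \<Longrightarrow>
    am_step (plug E Tt, (I, C), L) (plug E (TFV p), (I, Cnot w [] # C), L(p \<mapsto> w))"
| am_not: "new_wire I C L w \<Longrightarrow> L p = None \<Longrightarrow> L x = Some wx \<Longrightarrow>
    am_step (plug E (TApp TNot (TFV x)), (I, C), L)
            (plug E (TFV p), (I, Cnot w [(False, wx)] # C), L(p \<mapsto> w))"
| am_and: "new_wire I C L w \<Longrightarrow> L p = None \<Longrightarrow> L x = Some wx \<Longrightarrow> L y = Some wy \<Longrightarrow>
    am_step (plug E (TApp TAnd (TPair (TFV x) (TFV y))), (I, C), L)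
            (plug E (TFV p), (I, Cnot w [(True, wx), (True, wy)] # C), L(p \<mapsto> w))"
| am_xor: "new_wire I C L w \<Longrightarrow> L p = None \<Longrightarrow> L x = Some wx \<Longrightarrow> L y = Some wy \<Longrightarrow>
    am_step (plug E (TApp TXor (TPair (TFV x) (TFV y))), (I, C), L)
            (plug E (TFV p), (I, Cnot w [(True, wx)] # Cnot w [(True, wy)] # C), L(p \<mapsto> w))"
| am_if: "L p = Some wp \<Longrightarrow> fo_ext L V \<Longrightarrow> fo_ext L W \<Longrightarrow> same_shape V W \<Longrightarrow>
    fo_term U \<Longrightarrow> same_shape U V \<Longrightarrow> distinct (fvars U) \<Longrightarrow>
    (\<forall>u \<in> set (fvars U). L u = None) \<Longrightarrow>
    length ws = length (fvars U) \<Longrightarrow> distinct ws \<Longrightarrow> (\<forall>w \<in> set ws. new_wire I C L w) \<Longrightarrow>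
    am_step (plug E (TIf (TFV p) V W), (I, C), L)
            (plug E U,
             (I, if_gates wp (zip ws (zip (map (the \<circ> L) (fvars V)) (map (the \<circ> L) (fvars W)))) @ C),
             L ++ map_of (zip (fvars U) ws))"
| am_err: "L p \<noteq> None \<Longrightarrow> fo_ext L V \<Longrightarrow> fo_ext L W \<Longrightarrow> \<not> same_shape V W \<Longrightarrow>
    am_step (plug E (TIf (TFV p) V W), RC, L) (plug E TErr, RC, L)"

definition readback :: "trm \<Rightarrow> nat set \<Rightarrow> gate list \<Rightarrow> (nat \<Rightarrow> nat option) \<Rightarrow>
    (nat \<Rightarrow> bool) \<Rightarrow> trm" where
  "readback M I C L u =
     (let v = run_circuit I C u
      in subst_fv (\<lambda>x. case L x of Some w \<Rightarrow> bconst (v w) | None \<Rightarrow> TFV x) M)"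

end

theory Submission
  imports Defs
begin

text \<open>Write \<open>M\<^sub>u\<close> for \<open>M\<close> with the input bits \<open>u\<close> substituted for its free variables; the
  let-binding of the inputs reduces to \<open>M\<^sub>u\<close>. Reading back a machine state yields a term that
  approximates a reduct of \<open>M\<^sub>u\<close>, where approximation allows \<open>Err\<close> to stand for anything: each
  machine step either leaves the readback unchanged, contracts one redex in it (the wires of the
  circuit carry exactly the boolean values that the contracted redexes compute), or replaces a
  subterm by \<open>Err\<close>, and reductions of an approximated term can be replayed on any term
  approximating it. In the final state the readback is a tuple of boolean constants, which contains no
  \<open>Err\<close> and is a normal form, so by confluence (Takahashi's parallel reduction) it is the only
  such tuple that \<open>M\<^sub>u\<close> reduces to. Subject reduction, for typing up to the unfolding
  \<open>[A] = 1 \<oplus> A \<times> [A]\<close>, forces this tuple to have \<open>m\<close> components.\<close>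

lemma lift_lift: "i \<le> k \<Longrightarrow> lift (Suc k) (lift i t) = lift i (lift k t)"
  by (induct t arbitrary: i k) auto

lemma lift_subst [simp]: "j \<le> i \<Longrightarrow> lift i (subst t j s) = subst (lift (Suc i) t) j (lift i s)"
  by (induct t arbitrary: i j s) (simp_all add: diff_Suc lift_lift split: nat.split)

lemma lift_subst_ge: "i \<le> j \<Longrightarrow> lift i (subst t j s) = subst (lift i t) (Suc j) (lift i s)"
  by (induct t arbitrary: i j s) (auto simp: lift_lift)

lemma subst_lift [simp]: "subst (lift k t) k s = t"
  by (induct t arbitrary: k s) simp_all

lemma subst_subst:
  "i \<le> j \<Longrightarrow> subst (subst t (Suc j) (lift i v)) i (subst u j v) = subst (subst t i u) j v"
  by (induct t arbitrary: i j u v)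
    (simp_all add: diff_Suc lift_lift [symmetric] lift_subst_ge split: nat.split)

lemma bconst_closed [simp]:
  "lift c (bconst a) = bconst a" "subst (bconst a) k s = bconst a"
  "subst_fv f (bconst a) = bconst a" "close x d (bconst a) = bconst a" "fvars (bconst a) = []"
  by (auto simp: bconst_def)

fun ctx_comp :: "ctx \<Rightarrow> ctx \<Rightarrow> ctx" where
  "ctx_comp Hole F = F"
| "ctx_comp (CLam E) F = CLam (ctx_comp E F)"
| "ctx_comp (CAppL E N) F = CAppL (ctx_comp E F) N"
| "ctx_comp (CAppR M E) F = CAppR M (ctx_comp E F)"
| "ctx_comp (CPairL E N) F = CPairL (ctx_comp E F) N"
| "ctx_comp (CPairR M E) F = CPairR M (ctx_comp E F)"
| "ctx_comp (CFst E) F = CFst (ctx_comp E F)"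
| "ctx_comp (CSnd E) F = CSnd (ctx_comp E F)"
| "ctx_comp (CLetL E N) F = CLetL (ctx_comp E F) N"
| "ctx_comp (CLetR M E) F = CLetR M (ctx_comp E F)"
| "ctx_comp (CIf1 E M N) F = CIf1 (ctx_comp E F) M N"
| "ctx_comp (CIf2 P E N) F = CIf2 P (ctx_comp E F) N"
| "ctx_comp (CIf3 P M E) F = CIf3 P M (ctx_comp E F)"
| "ctx_comp (CInj1 E) F = CInj1 (ctx_comp E F)"
| "ctx_comp (CInj2 E) F = CInj2 (ctx_comp E F)"
| "ctx_comp (CMatch1 E M N) F = CMatch1 (ctx_comp E F) M N"
| "ctx_comp (CMatch2 P E N) F = CMatch2 P (ctx_comp E F) N"
| "ctx_comp (CMatch3 P M E) F = CMatch3 P M (ctx_comp E F)"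
| "ctx_comp (CY E) F = CY (ctx_comp E F)"

lemma plug_ctx_comp: "plug (ctx_comp E F) R = plug E (plug F R)"
  by (induct E) auto

lemma step_plug: "step a b \<Longrightarrow> step (plug E a) (plug E b)"
  by (induct rule: step.induct) (metis plug_ctx_comp step.intros)

lemma steps_plug: "step\<^sup>*\<^sup>* a b \<Longrightarrow> step\<^sup>*\<^sup>* (plug E a) (plug E b)"
  by (induct rule: rtranclp_induct) (auto intro: rtranclp.rtrancl_into_rtrancl step_plug)

lemma step_redex: "base_red R R' \<or> bool_red R R' \<Longrightarrow> step R R'"
  using step.intros[of R R' Hole] by simp

lemma steps_redex: "base_red R R' \<or> bool_red R R' \<Longrightarrow> step\<^sup>*\<^sup>* a R \<Longrightarrow> step\<^sup>*\<^sup>* a R'"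
  by (blast intro: rtranclp.rtrancl_into_rtrancl step_redex)

lemma steps_cong:
  shows "step\<^sup>*\<^sup>* a a' \<Longrightarrow> step\<^sup>*\<^sup>* (TLam a) (TLam a')"
    and "step\<^sup>*\<^sup>* a a' \<Longrightarrow> step\<^sup>*\<^sup>* b b' \<Longrightarrow> step\<^sup>*\<^sup>* (TApp a b) (TApp a' b')"
    and "step\<^sup>*\<^sup>* a a' \<Longrightarrow> step\<^sup>*\<^sup>* b b' \<Longrightarrow> step\<^sup>*\<^sup>* (TPair a b) (TPair a' b')"
    and "step\<^sup>*\<^sup>* a a' \<Longrightarrow> step\<^sup>*\<^sup>* (TFst a) (TFst a')"
    and "step\<^sup>*\<^sup>* a a' \<Longrightarrow> step\<^sup>*\<^sup>* (TSnd a) (TSnd a')"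
    and "step\<^sup>*\<^sup>* a a' \<Longrightarrow> step\<^sup>*\<^sup>* b b' \<Longrightarrow> step\<^sup>*\<^sup>* (TLetSkip a b) (TLetSkip a' b')"
    and "step\<^sup>*\<^sup>* a a' \<Longrightarrow> step\<^sup>*\<^sup>* b b' \<Longrightarrow> step\<^sup>*\<^sup>* c c' \<Longrightarrow>
      step\<^sup>*\<^sup>* (TIf a b c) (TIf a' b' c')"
    and "step\<^sup>*\<^sup>* a a' \<Longrightarrow> step\<^sup>*\<^sup>* (TInj1 a) (TInj1 a')"
    and "step\<^sup>*\<^sup>* a a' \<Longrightarrow> step\<^sup>*\<^sup>* (TInj2 a) (TInj2 a')"
    and "step\<^sup>*\<^sup>* a a' \<Longrightarrow> step\<^sup>*\<^sup>* b b' \<Longrightarrow> step\<^sup>*\<^sup>* c c' \<Longrightarrow>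
      step\<^sup>*\<^sup>* (TMatch a b c) (TMatch a' b' c')"
    and "step\<^sup>*\<^sup>* a a' \<Longrightarrow> step\<^sup>*\<^sup>* (TY a) (TY a')"
  using steps_plug[of a a' "CLam Hole"]
    steps_plug[of a a' "CAppL Hole b"] steps_plug[of b b' "CAppR a' Hole"]
    steps_plug[of a a' "CPairL Hole b"] steps_plug[of b b' "CPairR a' Hole"]
    steps_plug[of a a' "CFst Hole"] steps_plug[of a a' "CSnd Hole"]
    steps_plug[of a a' "CLetL Hole b"] steps_plug[of b b' "CLetR a' Hole"]
    steps_plug[of a a' "CIf1 Hole b c"] steps_plug[of b b' "CIf2 a' Hole c"]
    steps_plug[of c c' "CIf3 a' b' Hole"]
    steps_plug[of a a' "CInj1 Hole"] steps_plug[of a a' "CInj2 Hole"]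
    steps_plug[of a a' "CMatch1 Hole b c"] steps_plug[of b b' "CMatch2 a' Hole c"]
    steps_plug[of c c' "CMatch3 a' b' Hole"] steps_plug[of a a' "CY Hole"]
  by (auto intro: rtranclp_trans)

section \<open>Confluence\<close>

inductive par_step :: "trm \<Rightarrow> trm \<Rightarrow> bool" where
  par_TVar: "par_step (TVar i) (TVar i)"
| par_TFV: "par_step (TFV x) (TFV x)"
| par_TSkip: "par_step TSkip TSkip"
| par_Tt: "par_step Tt Tt"
| par_Ff: "par_step Ff Ff"
| par_TAnd: "par_step TAnd TAnd"
| par_TXor: "par_step TXor TXor"
| par_TNot: "par_step TNot TNot"
| par_TSplit: "par_step TSplit TSplit"
| par_TErr: "par_step TErr TErr"
| par_TLam: "par_step M M' \<Longrightarrow> par_step (TLam M) (TLam M')"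
| par_TApp: "par_step M M' \<Longrightarrow> par_step N N' \<Longrightarrow> par_step (TApp M N) (TApp M' N')"
| par_TPair: "par_step M M' \<Longrightarrow> par_step N N' \<Longrightarrow> par_step (TPair M N) (TPair M' N')"
| par_TFst: "par_step M M' \<Longrightarrow> par_step (TFst M) (TFst M')"
| par_TSnd: "par_step M M' \<Longrightarrow> par_step (TSnd M) (TSnd M')"
| par_TLetSkip: "par_step M M' \<Longrightarrow> par_step N N' \<Longrightarrow> par_step (TLetSkip M N) (TLetSkip M' N')"
| par_TIf: "par_step P P' \<Longrightarrow> par_step M M' \<Longrightarrow> par_step N N' \<Longrightarrow>
    par_step (TIf P M N) (TIf P' M' N')"
| par_TInj1: "par_step M M' \<Longrightarrow> par_step (TInj1 M) (TInj1 M')"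
| par_TInj2: "par_step M M' \<Longrightarrow> par_step (TInj2 M) (TInj2 M')"
| par_TMatch: "par_step P P' \<Longrightarrow> par_step M M' \<Longrightarrow> par_step N N' \<Longrightarrow>
    par_step (TMatch P M N) (TMatch P' M' N')"
| par_TY: "par_step M M' \<Longrightarrow> par_step (TY M) (TY M')"
| par_beta: "par_step M M' \<Longrightarrow> par_step N N' \<Longrightarrow> par_step (TApp (TLam M) N) (subst M' 0 N')"
| par_fst: "par_step M M' \<Longrightarrow> par_step (TFst (TPair M N)) M'"
| par_snd: "par_step N N' \<Longrightarrow> par_step (TSnd (TPair M N)) N'"
| par_let: "par_step M M' \<Longrightarrow> par_step (TLetSkip TSkip M) M'"
| par_split: "par_step M M' \<Longrightarrow> par_step (TApp TSplit M) M'"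
| par_match1: "par_step P P' \<Longrightarrow> par_step M M' \<Longrightarrow>
    par_step (TMatch (TInj1 P) M N) (subst M' 0 P')"
| par_match2: "par_step P P' \<Longrightarrow> par_step N N' \<Longrightarrow>
    par_step (TMatch (TInj2 P) M N) (subst N' 0 P')"
| par_Y: "par_step M M' \<Longrightarrow> par_step (TY M) (TApp M' (TY M'))"
| par_if_tt: "par_step M M' \<Longrightarrow> par_step (TIf Tt M N) M'"
| par_if_ff: "par_step N N' \<Longrightarrow> par_step (TIf Ff M N) N'"
| par_not: "par_step (TApp TNot (bconst a)) (bconst (\<not> a))"
| par_and: "par_step (TApp TAnd (TPair (bconst a) (bconst b))) (bconst (a \<and> b))"
| par_xor: "par_step (TApp TXor (TPair (bconst a) (bconst b))) (bconst (a \<noteq> b))"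

lemma par_step_refl [simp, intro]: "par_step t t"
  by (induct t) (auto intro: par_step.intros)

lemma par_step_plug: "par_step a b \<Longrightarrow> par_step (plug E a) (plug E b)"
  by (induct E) (auto intro: par_step.intros)

lemma step_par_step: "step a b \<Longrightarrow> par_step a b"
  by (induct rule: step.induct)
    (auto elim!: base_red.cases bool_red.cases intro: par_step.intros par_step_plug)

lemma par_step_steps: "par_step a b \<Longrightarrow> step\<^sup>*\<^sup>* a b"
proof (induct rule: par_step.induct)
  case (par_beta M M' N N')
  show ?case
    by (rule steps_redex[of "TApp (TLam M') N'"]) (auto intro: base_red.intros steps_cong par_beta)
next
  case (par_fst M M' N)
  show ?case by (rule steps_redex[of "TFst (TPair M' N)"]) (auto intro: base_red.intros steps_cong par_fst)
next
  case (par_snd N N' M)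
  show ?case by (rule steps_redex[of "TSnd (TPair M N')"]) (auto intro: base_red.intros steps_cong par_snd)
next
  case (par_match1 P P' M M' N)
  show ?case
    by (rule steps_redex[of "TMatch (TInj1 P') M' N"]) (auto intro: base_red.intros steps_cong par_match1)
next
  case (par_match2 P P' N N' M)
  show ?case
    by (rule steps_redex[of "TMatch (TInj2 P') M N'"]) (auto intro: base_red.intros steps_cong par_match2)
next
  case (par_xor a b)
  show ?case by (rule steps_redex[OF _ rtranclp.rtrancl_refl]) (metis bool_red.intros(5))
qed (auto intro: steps_cong steps_redex base_red.intros bool_red.intros
      steps_redex[OF _ rtranclp.rtrancl_refl])

lemma par_step_lift: "par_step M M' \<Longrightarrow> par_step (lift k M) (lift k M')"
proof (induct arbitrary: k rule: par_step.induct)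
  case (par_beta M M' N N')
  then show ?case using par_step.par_beta[of "lift (Suc k) M" "lift (Suc k) M'" "lift k N" "lift k N'"] by simp
next
  case (par_match1 P P' M M' N)
  then show ?case using par_step.par_match1[of "lift k P" "lift k P'" "lift (Suc k) M" "lift (Suc k) M'"] by simp
next
  case (par_match2 P P' N N' M)
  then show ?case using par_step.par_match2[of "lift k P" "lift k P'" "lift (Suc k) N" "lift (Suc k) N'"] by simp
qed (auto intro: par_step.intros, metis par_step.par_xor)

lemma subst_subst_0:
  "subst (subst t 0 u) k v = subst (subst t (Suc k) (lift 0 v)) 0 (subst u k v)"
  using subst_subst[of 0 k t v u] by simp

lemma par_step_subst:
  "par_step M M' \<Longrightarrow> par_step N N' \<Longrightarrow> par_step (subst M k N) (subst M' k N')"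
proof (induct arbitrary: k N N' rule: par_step.induct)
  case (par_beta M M' P P')
  then show ?case by (auto simp: subst_subst_0 intro!: par_step.par_beta par_step_lift)
next
  case (par_match1 P P' M M' N)
  then show ?case by (simp add: subst_subst_0) (metis par_step.par_match1 par_step_lift)
next
  case (par_match2 P P' N N' M)
  then show ?case by (simp add: subst_subst_0) (metis par_step.par_match2 par_step_lift)
qed (auto intro!: par_step.intros, (metis par_step_lift par_step.par_xor)+)

definition bool_of :: "trm \<Rightarrow> bool option" where
  "bool_of t = (if t = Tt then Some True else if t = Ff then Some False else None)"

definition bool_pair_of :: "trm \<Rightarrow> (bool \<times> bool) option" where
  "bool_pair_of t = (case t of
     TPair a b \<Rightarrow> (case (bool_of a, bool_of b) of (Some x, Some y) \<Rightarrow> Some (x, y) | _ \<Rightarrow> None)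
   | _ \<Rightarrow> None)"

lemma bool_of_eq_Some: "bool_of t = Some a \<longleftrightarrow> t = bconst a"
  by (auto simp: bool_of_def bconst_def)

lemma bool_of_bconst [simp]: "bool_of (bconst a) = Some a"
  by (simp add: bool_of_eq_Some)

lemma bool_pair_of_eq_Some: "bool_pair_of t = Some (a, b) \<longleftrightarrow> t = TPair (bconst a) (bconst b)"
  by (auto simp: bool_pair_of_def bool_of_def bconst_def split: trm.split if_splits)

text \<open>Takahashi's complete development, contracting all redexes of a term at once.\<close>
fun dev :: "trm \<Rightarrow> trm" where
  "dev (TVar i) = TVar i"
| "dev (TFV x) = TFV x"
| "dev (TLam M) = TLam (dev M)"
| "dev (TApp M N) = (case M of
      TLam M0 \<Rightarrow> subst (dev M0) 0 (dev N)
    | TSplit \<Rightarrow> dev N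
    | TNot \<Rightarrow> (case bool_of N of Some a \<Rightarrow> bconst (\<not> a) | None \<Rightarrow> TApp TNot (dev N))
    | TAnd \<Rightarrow> (case bool_pair_of N of Some (a, b) \<Rightarrow> bconst (a \<and> b) | None \<Rightarrow> TApp TAnd (dev N))
    | TXor \<Rightarrow> (case bool_pair_of N of Some (a, b) \<Rightarrow> bconst (a \<noteq> b) | None \<Rightarrow> TApp TXor (dev N))
    | _ \<Rightarrow> TApp (dev M) (dev N))"
| "dev (TPair M N) = TPair (dev M) (dev N)"
| "dev (TFst M) = (case M of TPair a b \<Rightarrow> dev a | _ \<Rightarrow> TFst (dev M))"
| "dev (TSnd M) = (case M of TPair a b \<Rightarrow> dev b | _ \<Rightarrow> TSnd (dev M))"
| "dev TSkip = TSkip"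
| "dev (TLetSkip M N) = (case M of TSkip \<Rightarrow> dev N | _ \<Rightarrow> TLetSkip (dev M) (dev N))"
| "dev Tt = Tt"
| "dev Ff = Ff"
| "dev (TIf P M N) = (case P of Tt \<Rightarrow> dev M | Ff \<Rightarrow> dev N | _ \<Rightarrow> TIf (dev P) (dev M) (dev N))"
| "dev TAnd = TAnd"
| "dev TXor = TXor"
| "dev TNot = TNot"
| "dev (TInj1 M) = TInj1 (dev M)"
| "dev (TInj2 M) = TInj2 (dev M)"
| "dev (TMatch P M N) = (case P of
      TInj1 Q \<Rightarrow> subst (dev M) 0 (dev Q)
    | TInj2 Q \<Rightarrow> subst (dev N) 0 (dev Q)
    | _ \<Rightarrow> TMatch (dev P) (dev M) (dev N))"
| "dev TSplit = TSplit"
| "dev (TY M) = TApp (dev M) (TY (dev M))"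
| "dev TErr = TErr"

inductive_cases par_stepE:
  "par_step (TLam M) t" "par_step (TPair M N) t" "par_step (TInj1 M) t" "par_step (TInj2 M) t"
  "par_step TSkip t" "par_step Tt t" "par_step Ff t" "par_step TSplit t" "par_step TNot t"
  "par_step TAnd t" "par_step TXor t"

lemma par_step_bconst: "par_step (bconst a) t \<Longrightarrow> t = bconst a"
  by (cases a) (auto simp: bconst_def elim: par_stepE)

lemma par_step_dev_app:
  assumes M: "par_step M M'" "par_step M' (dev M)" and N: "par_step N N'" "par_step N' (dev N)"
  shows "par_step (TApp M' N') (dev (TApp M N))"
proof (cases M)
  case (TLam M0)
  with M N show ?thesis by (auto elim!: par_stepE intro: par_step_subst par_step.par_beta)
next
  case TSplit
  with M N show ?thesis by (auto elim!: par_stepE intro: par_step.par_split)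
next
  case TNot
  with M have "M' = TNot" by (auto elim: par_stepE)
  with TNot N show ?thesis
    by (cases "bool_of N") (auto simp: bool_of_eq_Some dest!: par_step_bconst intro: par_step.intros)
next
  case TAnd
  with M have "M' = TAnd" by (auto elim: par_stepE)
  with TAnd N show ?thesis
    by (cases "bool_pair_of N")
      (auto simp: bool_pair_of_eq_Some elim!: par_stepE dest!: par_step_bconst intro: par_step.intros)
next
  case TXor
  with M have "M' = TXor" by (auto elim: par_stepE)
  with TXor N show ?thesis
    by (cases "bool_pair_of N")
      (auto simp: bool_pair_of_eq_Some elim!: par_stepE dest!: par_step_bconst intro: par_step.intros,
        metis par_step.par_xor)
qed (use M N in \<open>auto intro: par_step.intros\<close>)

lemma par_step_dev: "par_step s t \<Longrightarrow> par_step t (dev s)"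
proof (induct rule: par_step.induct)
  case (par_TApp M M' N N')
  then show ?case by (rule par_step_dev_app)
next
  case (par_TFst M M')
  then show ?case by (cases M) (auto elim!: par_stepE intro: par_step.intros)
next
  case (par_TSnd M M')
  then show ?case by (cases M) (auto elim!: par_stepE intro: par_step.intros)
next
  case (par_TLetSkip M M' N N')
  then show ?case by (cases M) (auto elim!: par_stepE intro: par_step.intros)
next
  case (par_TIf P P' M M' N N')
  then show ?case by (cases P) (auto elim!: par_stepE intro: par_step.intros)
next
  case (par_TMatch P P' M M' N N')
  then show ?case by (cases P) (auto elim!: par_stepE intro: par_step.intros par_step_subst)
next
  case (par_not a)
  then show ?case by (cases a) (auto simp: bconst_def bool_of_def)
next
  case (par_and a b)
  then show ?case by (cases a; cases b) (auto simp: bconst_def bool_pair_of_def bool_of_def)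
next
  case (par_xor a b)
  then show ?case by (cases a; cases b) (auto simp: bconst_def bool_pair_of_def bool_of_def)
qed (auto intro: par_step.intros par_step_subst)

lemma par_step_strip:
  "par_step\<^sup>*\<^sup>* a c \<Longrightarrow> par_step a b \<Longrightarrow> \<exists>d. par_step\<^sup>*\<^sup>* b d \<and> par_step c d"
proof (induct arbitrary: b rule: rtranclp_induct)
  case (step y z)
  then obtain d where "par_step\<^sup>*\<^sup>* b d" "par_step y d" by blast
  with step.hyps(2) show ?case by (meson par_step_dev rtranclp.rtrancl_into_rtrancl)
qed auto

lemma par_steps_eq_steps: "par_step\<^sup>*\<^sup>* = step\<^sup>*\<^sup>*"
  by (rule rtranclp_subset) (auto intro: step_par_step par_step_steps)

lemma steps_confluent:
  "step\<^sup>*\<^sup>* a b \<Longrightarrow> step\<^sup>*\<^sup>* a c \<Longrightarrow> \<exists>d. step\<^sup>*\<^sup>* b d \<and> step\<^sup>*\<^sup>* c d"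
  unfolding par_steps_eq_steps[symmetric]
proof (induct arbitrary: c rule: rtranclp_induct)
  case (step y z)
  then obtain d where "par_step\<^sup>*\<^sup>* y d" "par_step\<^sup>*\<^sup>* c d" by blast
  with step.hyps(2) show ?case by (meson par_step_strip rtranclp.rtrancl_into_rtrancl)
qed auto

inductive ground_value :: "trm \<Rightarrow> bool" where
  "ground_value Tt"
| "ground_value Ff"
| "ground_value TSkip"
| "ground_value a \<Longrightarrow> ground_value b \<Longrightarrow> ground_value (TPair a b)"

lemma ground_value_bconst [simp]: "ground_value (bconst b)"
  by (simp add: bconst_def ground_value.intros)

lemma ground_value_tuple_bconst: "ground_value (tuple (map bconst cs))"
  by (induct cs rule: induct_list012) (auto intro: ground_value.intros)

lemma ground_value_no_step: "ground_value t \<Longrightarrow> \<not> step t u"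
proof
  assume "ground_value t" "step t u"
  from \<open>step t u\<close> obtain E R R' where "t = plug E R" "base_red R R' \<or> bool_red R R'"
    by (cases rule: step.cases) auto
  moreover from \<open>ground_value t\<close> \<open>t = plug E R\<close> have "ground_value R"
    by (induct E arbitrary: t) (auto elim: ground_value.cases)
  ultimately show False
    by (auto elim: ground_value.cases base_red.cases bool_red.cases)
qed

lemma ground_value_steps: "step\<^sup>*\<^sup>* t u \<Longrightarrow> ground_value t \<Longrightarrow> u = t"
  by (induct rule: converse_rtranclp_induct) (auto dest: ground_value_no_step)

lemma steps_ground_value_unique:
  "step\<^sup>*\<^sup>* a v \<Longrightarrow> step\<^sup>*\<^sup>* a v' \<Longrightarrow> ground_value v \<Longrightarrow> ground_value v' \<Longrightarrow> v = v'"
  by (metis steps_confluent ground_value_steps)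

lemma ground_value_closed:
  assumes "ground_value t"
  shows "lift c t = t" and "close x d t = t" and "subst_fv f t = t" and "fvars t = []"
  using assms by (induct arbitrary: c d rule: ground_value.induct) auto

lemma subst_fv_cong: "(\<And>x. x \<in> set (fvars t) \<Longrightarrow> f x = g x) \<Longrightarrow> subst_fv f t = subst_fv g t"
  by (induct t) auto

lemma subst_fv_TFV: "(\<And>x. x \<in> set (fvars t) \<Longrightarrow> f x = TFV x) \<Longrightarrow> subst_fv f t = t"
  by (induct t) auto

lemma subst_fv_subst_fv: "subst_fv g (subst_fv f t) = subst_fv (\<lambda>x. subst_fv g (f x)) t"
  by (induct t) auto

lemma fvars_lift [simp]: "fvars (lift c t) = fvars t"
  by (induct t arbitrary: c) auto

lemma fvars_subst: "set (fvars (subst t k s)) \<subseteq> set (fvars t) \<union> set (fvars s)"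
  by (induct t arbitrary: k s) (auto simp: subset_iff, (metis fvars_lift)+)

lemma subst_fv_lift: "(\<And>x c. lift c (f x) = f x) \<Longrightarrow> subst_fv f (lift c t) = lift c (subst_fv f t)"
  by (induct t arbitrary: c) auto

lemma subst_fv_subst:
  assumes "\<And>x c. lift c (f x) = f x" and "\<And>x k s. subst (f x) k s = f x"
  shows "subst_fv f (subst t k s) = subst (subst_fv f t) k (subst_fv f s)"
  by (induct t arbitrary: k s) (auto simp: assms subst_fv_lift)

fun ctx_subst_fv :: "(nat \<Rightarrow> trm) \<Rightarrow> ctx \<Rightarrow> ctx" where
  "ctx_subst_fv f Hole = Hole"
| "ctx_subst_fv f (CLam E) = CLam (ctx_subst_fv f E)"
| "ctx_subst_fv f (CAppL E N) = CAppL (ctx_subst_fv f E) (subst_fv f N)"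
| "ctx_subst_fv f (CAppR M E) = CAppR (subst_fv f M) (ctx_subst_fv f E)"
| "ctx_subst_fv f (CPairL E N) = CPairL (ctx_subst_fv f E) (subst_fv f N)"
| "ctx_subst_fv f (CPairR M E) = CPairR (subst_fv f M) (ctx_subst_fv f E)"
| "ctx_subst_fv f (CFst E) = CFst (ctx_subst_fv f E)"
| "ctx_subst_fv f (CSnd E) = CSnd (ctx_subst_fv f E)"
| "ctx_subst_fv f (CLetL E N) = CLetL (ctx_subst_fv f E) (subst_fv f N)"
| "ctx_subst_fv f (CLetR M E) = CLetR (subst_fv f M) (ctx_subst_fv f E)"
| "ctx_subst_fv f (CIf1 E M N) = CIf1 (ctx_subst_fv f E) (subst_fv f M) (subst_fv f N)"
| "ctx_subst_fv f (CIf2 P E N) = CIf2 (subst_fv f P) (ctx_subst_fv f E) (subst_fv f N)"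
| "ctx_subst_fv f (CIf3 P M E) = CIf3 (subst_fv f P) (subst_fv f M) (ctx_subst_fv f E)"
| "ctx_subst_fv f (CInj1 E) = CInj1 (ctx_subst_fv f E)"
| "ctx_subst_fv f (CInj2 E) = CInj2 (ctx_subst_fv f E)"
| "ctx_subst_fv f (CMatch1 E M N) = CMatch1 (ctx_subst_fv f E) (subst_fv f M) (subst_fv f N)"
| "ctx_subst_fv f (CMatch2 P E N) = CMatch2 (subst_fv f P) (ctx_subst_fv f E) (subst_fv f N)"
| "ctx_subst_fv f (CMatch3 P M E) = CMatch3 (subst_fv f P) (subst_fv f M) (ctx_subst_fv f E)"
| "ctx_subst_fv f (CY E) = CY (ctx_subst_fv f E)"

lemma subst_fv_plug: "subst_fv f (plug E R) = plug (ctx_subst_fv f E) (subst_fv f R)"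
  by (induct E) auto

lemma fvars_plug: "set (fvars (plug E R)) = set (fvars (plug E TSkip)) \<union> set (fvars R)"
  by (induct E) auto

lemma ctx_subst_fv_cong:
  "(\<And>x. x \<in> set (fvars (plug E R)) \<Longrightarrow> f x = g x) \<Longrightarrow> ctx_subst_fv f E = ctx_subst_fv g E"
  by (induct E) (auto intro: subst_fv_cong)

section \<open>Approximation up to errors\<close>

inductive approx :: "trm \<Rightarrow> trm \<Rightarrow> bool" where
  approx_TErr: "approx TErr t"
| approx_TVar: "approx (TVar i) (TVar i)"
| approx_TFV: "approx (TFV x) (TFV x)"
| approx_TSkip: "approx TSkip TSkip"
| approx_Tt: "approx Tt Tt"
| approx_Ff: "approx Ff Ff"
| approx_TAnd: "approx TAnd TAnd"
| approx_TXor: "approx TXor TXor"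
| approx_TNot: "approx TNot TNot"
| approx_TSplit: "approx TSplit TSplit"
| approx_TLam: "approx M M' \<Longrightarrow> approx (TLam M) (TLam M')"
| approx_TApp: "approx M M' \<Longrightarrow> approx N N' \<Longrightarrow> approx (TApp M N) (TApp M' N')"
| approx_TPair: "approx M M' \<Longrightarrow> approx N N' \<Longrightarrow> approx (TPair M N) (TPair M' N')"
| approx_TFst: "approx M M' \<Longrightarrow> approx (TFst M) (TFst M')"
| approx_TSnd: "approx M M' \<Longrightarrow> approx (TSnd M) (TSnd M')"
| approx_TLetSkip: "approx M M' \<Longrightarrow> approx N N' \<Longrightarrow> approx (TLetSkip M N) (TLetSkip M' N')"
| approx_TIf: "approx P P' \<Longrightarrow> approx M M' \<Longrightarrow> approx N N' \<Longrightarrow> approx (TIf P M N) (TIf P' M' N')"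
| approx_TInj1: "approx M M' \<Longrightarrow> approx (TInj1 M) (TInj1 M')"
| approx_TInj2: "approx M M' \<Longrightarrow> approx (TInj2 M) (TInj2 M')"
| approx_TMatch: "approx P P' \<Longrightarrow> approx M M' \<Longrightarrow> approx N N' \<Longrightarrow>
    approx (TMatch P M N) (TMatch P' M' N')"
| approx_TY: "approx M M' \<Longrightarrow> approx (TY M) (TY M')"

lemma approx_refl [simp, intro]: "approx t t"
  by (induct t) (auto intro: approx.intros)

lemma approx_lift: "approx M M' \<Longrightarrow> approx (lift c M) (lift c M')"
  by (induct arbitrary: c rule: approx.induct) (auto intro: approx.intros)

lemma approx_subst: "approx M M' \<Longrightarrow> approx N N' \<Longrightarrow> approx (subst M k N) (subst M' k N')"
  by (induct arbitrary: k N N' rule: approx.induct)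
    (auto intro!: approx.intros, (metis approx_lift)+)

lemma approx_ground_value: "approx a t \<Longrightarrow> ground_value a \<Longrightarrow> t = a"
  by (induct rule: approx.induct) (auto elim: ground_value.cases)

inductive_cases approxE:
  "approx (TLam M) t" "approx (TApp M N) t" "approx (TPair M N) t"
  "approx (TFst M) t" "approx (TSnd M) t" "approx (TLetSkip M N) t" "approx (TIf P M N) t"
  "approx (TInj1 M) t" "approx (TInj2 M) t" "approx (TMatch P M N) t" "approx (TY M) t"
  "approx TSkip t" "approx TSplit t" "approx Tt t" "approx Ff t" "approx TNot t"
  "approx TAnd t" "approx TXor t"

lemma approx_plug:
  assumes "\<And>Y. approx R Y \<Longrightarrow> \<exists>Y'. step\<^sup>*\<^sup>* Y Y' \<and> approx R' Y'"
  shows "\<forall>r. approx (plug E R) r \<longrightarrow> (\<exists>r'. step\<^sup>*\<^sup>* r r' \<and> approx (plug E R') r')"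
  using assms by (induct E) (auto elim!: approxE, (blast intro: approx.intros steps_cong)+)

section \<open>Subject reduction\<close>

text \<open>Reduction of \<open>split\<close> turns a term of type \<open>[A]\<close> into one of type \<open>1 \<oplus> A \<times> [A]\<close>, so types
  are preserved only modulo unfolding list types; \<open>typing_iso\<close> adds the unfolding rule.\<close>
inductive typing_iso :: "(nat \<Rightarrow> ty option) \<Rightarrow> ty list \<Rightarrow> trm \<Rightarrow> ty \<Rightarrow> bool"
  for D :: "nat \<Rightarrow> ty option" where
  ti_fv: "D x = Some A \<Longrightarrow> typing_iso D G (TFV x) A"
| ti_var: "i < length G \<Longrightarrow> typing_iso D G (TVar i) (G ! i)"
| ti_lam: "typing_iso D (A # G) M B \<Longrightarrow> typing_iso D G (TLam M) (Arr A B)"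
| ti_app: "typing_iso D G M (Arr A B) \<Longrightarrow> typing_iso D G N A \<Longrightarrow> typing_iso D G (TApp M N) B"
| ti_pair: "typing_iso D G M A \<Longrightarrow> typing_iso D G N B \<Longrightarrow> typing_iso D G (TPair M N) (Prod A B)"
| ti_fst: "typing_iso D G M (Prod A B) \<Longrightarrow> typing_iso D G (TFst M) A"
| ti_snd: "typing_iso D G M (Prod A B) \<Longrightarrow> typing_iso D G (TSnd M) B"
| ti_skip: "typing_iso D G TSkip Unit"
| ti_letskip: "typing_iso D G M Unit \<Longrightarrow> typing_iso D G N C \<Longrightarrow> typing_iso D G (TLetSkip M N) C"
| ti_tt: "typing_iso D G Tt Bit"
| ti_ff: "typing_iso D G Ff Bit"
| ti_if: "typing_iso D G P Bit \<Longrightarrow> typing_iso D G M C \<Longrightarrow> typing_iso D G N C \<Longrightarrow> first_order C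
    \<Longrightarrow> typing_iso D G (TIf P M N) C"
| ti_and: "typing_iso D G TAnd (Arr (Prod Bit Bit) Bit)"
| ti_xor: "typing_iso D G TXor (Arr (Prod Bit Bit) Bit)"
| ti_not: "typing_iso D G TNot (Arr Bit Bit)"
| ti_inj1: "typing_iso D G M A \<Longrightarrow> typing_iso D G (TInj1 M) (Sum A B)"
| ti_inj2: "typing_iso D G M B \<Longrightarrow> typing_iso D G (TInj2 M) (Sum A B)"
| ti_match: "typing_iso D G P (Sum A B) \<Longrightarrow> typing_iso D (A # G) M C \<Longrightarrow> typing_iso D (B # G) N C
    \<Longrightarrow> typing_iso D G (TMatch P M N) C"
| ti_split: "typing_iso D G TSplit (Arr (List A) (Sum Unit (Prod A (List A))))"
| ti_Y: "typing_iso D G M (Arr A A) \<Longrightarrow> typing_iso D G (TY M) A"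
| ti_err: "typing_iso D G TErr A"
| ti_fold: "typing_iso D G M (Sum Unit (Prod A (List A))) \<Longrightarrow> typing_iso D G M (List A)"
| ti_unfold: "typing_iso D G M (List A) \<Longrightarrow> typing_iso D G M (Sum Unit (Prod A (List A)))"

lemmas typing_iso_syntax_directed = typing_iso.intros(1-21)

lemma typing_iso_bconst [simp, intro]: "typing_iso D G (bconst a) Bit"
  by (auto simp: bconst_def intro: typing_iso.intros)

lemma typing_subst_fv:
  "typing D G M T \<Longrightarrow> (\<And>x A G'. D x = Some A \<Longrightarrow> typing_iso D' G' (f x) A) \<Longrightarrow>
    typing_iso D' G (subst_fv f M) T"
  by (induct rule: typing.induct) (auto intro: typing_iso.intros)

lemma nth_insert_at:
  assumes "k \<le> length G"
  shows "i < k \<Longrightarrow> (take k G @ A # drop k G) ! i = G ! i"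
    and "(take k G @ A # drop k G) ! k = A"
    and "k \<le> i \<Longrightarrow> (take k G @ A # drop k G) ! Suc i = G ! i"
  using assms by (auto simp: nth_append min_def)

lemma typing_iso_lift:
  "typing_iso D G t T \<Longrightarrow> k \<le> length G \<Longrightarrow> typing_iso D (take k G @ A # drop k G) (lift k t) T"
proof (induct arbitrary: k rule: typing_iso.induct)
  case (ti_var i G)
  then show ?case
    using typing_iso.ti_var[where i = i and G = "take k G @ A # drop k G"]
      typing_iso.ti_var[where i = "Suc i" and G = "take k G @ A # drop k G"]
    by (auto simp: nth_insert_at)
next
  case (ti_lam A' G M B)
  then show ?case using ti_lam(2)[of "Suc k"] by (auto intro: typing_iso.intros)
next
  case (ti_match G P A' B M C N)
  then show ?case using ti_match(4)[of "Suc k"] ti_match(6)[of "Suc k"]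
    by (auto intro: typing_iso_syntax_directed)
qed (auto intro: typing_iso.intros)

lemma typing_iso_subst:
  "typing_iso D G' t T \<Longrightarrow> G' = take k G @ A # drop k G \<Longrightarrow> k \<le> length G \<Longrightarrow>
    typing_iso D G s A \<Longrightarrow> typing_iso D G (subst t k s) T"
proof (induct arbitrary: G k s rule: typing_iso.induct)
  case (ti_var i G')
  consider "i < k" | "i = k" | "k < i" by arith
  then show ?case
  proof cases
    case 3
    then have "G' ! i = G ! (i - 1)" using ti_var nth_insert_at(3)[of k G "i - 1" A] by simp
    with 3 ti_var show ?thesis using typing_iso.ti_var[where i = "i - 1" and G = G] by auto
  qed (use ti_var typing_iso.ti_var[where i = i and G = G] in \<open>auto simp: nth_insert_at\<close>)
next
  case (ti_lam A' G' M B)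
  then show ?case using typing_iso_lift[OF ti_lam(5), of 0 A'] ti_lam(2)[of "Suc k" "A' # G"]
    by (auto intro: typing_iso.ti_lam)
next
  case (ti_match G' P A' B M C N)
  have "typing_iso D G (subst P k s) (Sum A' B)" using ti_match by simp
  moreover have "typing_iso D (A' # G) (subst M (Suc k) (lift 0 s)) C"
    using ti_match(4)[of "Suc k" "A' # G"] ti_match(7-9) typing_iso_lift[OF ti_match(9), of 0 A'] by simp
  moreover have "typing_iso D (B # G) (subst N (Suc k) (lift 0 s)) C"
    using ti_match(6)[of "Suc k" "B # G"] ti_match(7-9) typing_iso_lift[OF ti_match(9), of 0 B] by simp
  ultimately show ?case by (auto intro: typing_iso.ti_match)
next
  case (ti_app G' M A' B N)
  show ?case using ti_app(2)[OF ti_app(5-7)] ti_app(4)[OF ti_app(5-7)] by (simp add: typing_iso.ti_app)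
next
  case (ti_pair G' M A' N B)
  show ?case using ti_pair(2)[OF ti_pair(5-7)] ti_pair(4)[OF ti_pair(5-7)] by (simp add: typing_iso.ti_pair)
next
  case (ti_fst G' M A' B)
  show ?case using ti_fst(2)[OF ti_fst(3-5)] by (simp add: typing_iso.ti_fst)
next
  case (ti_snd G' M A' B)
  show ?case using ti_snd(2)[OF ti_snd(3-5)] by (simp add: typing_iso.ti_snd)
next
  case (ti_letskip G' M N C)
  show ?case using ti_letskip(2)[OF ti_letskip(5-7)] ti_letskip(4)[OF ti_letskip(5-7)]
    by (simp add: typing_iso.ti_letskip)
next
  case (ti_if G' P M C N)
  show ?case using ti_if(2)[OF ti_if(8-10)] ti_if(4)[OF ti_if(8-10)] ti_if(6)[OF ti_if(8-10)] ti_if(7)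
    by (simp add: typing_iso.ti_if)
next
  case (ti_inj1 G' M A' B)
  show ?case using ti_inj1(2)[OF ti_inj1(3-5)] by (simp add: typing_iso.ti_inj1)
next
  case (ti_inj2 G' M B A')
  show ?case using ti_inj2(2)[OF ti_inj2(3-5)] by (simp add: typing_iso.ti_inj2)
next
  case (ti_Y G' M A')
  show ?case using ti_Y(2)[OF ti_Y(3-5)] by (simp add: typing_iso.ti_Y)
next
  case (ti_fold G' M A')
  show ?case using ti_fold(2)[OF ti_fold(3-5)] by (simp add: typing_iso.ti_fold)
next
  case (ti_unfold G' M A')
  show ?case using ti_unfold(2)[OF ti_unfold(3-5)] by (simp add: typing_iso.ti_unfold)
qed (auto intro: typing_iso.intros)

lemma typing_iso_subst0:
  "typing_iso D (A # G) t T \<Longrightarrow> typing_iso D G s A \<Longrightarrow> typing_iso D G (subst t 0 s) T"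
  by (erule typing_iso_subst[where k = 0]) simp_all

lemma typing_iso_TLamD: "typing_iso D G t T \<Longrightarrow> t = TLam M \<Longrightarrow> \<exists>A B. T = Arr A B \<and> typing_iso D (A # G) M B"
  by (induct rule: typing_iso.induct) auto

lemma typing_iso_TPairD:
  "typing_iso D G t T \<Longrightarrow> t = TPair M N \<Longrightarrow> \<exists>A B. T = Prod A B \<and> typing_iso D G M A \<and> typing_iso D G N B"
  by (induct rule: typing_iso.induct) auto

lemma typing_iso_TSplitD:
  "typing_iso D G t T \<Longrightarrow> t = TSplit \<Longrightarrow> \<exists>A. T = Arr (List A) (Sum Unit (Prod A (List A)))"
  by (induct rule: typing_iso.induct) auto

lemma typing_iso_boolD: "typing_iso D G t T \<Longrightarrow> t \<in> {Tt, Ff} \<Longrightarrow> T = Bit"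
  by (induct rule: typing_iso.induct) auto

lemma typing_iso_TSkipD: "typing_iso D G t T \<Longrightarrow> t = TSkip \<Longrightarrow> T = Unit"
  by (induct rule: typing_iso.induct) auto

lemma typing_iso_injD:
  "typing_iso D G t T \<Longrightarrow> t = TInj1 P \<Longrightarrow>
    (\<forall>A B. T = Sum A B \<longrightarrow> typing_iso D G P A) \<and> (\<forall>A. T = List A \<longrightarrow> typing_iso D G P Unit)"
  "typing_iso D G t T \<Longrightarrow> t = TInj2 P \<Longrightarrow>
    (\<forall>A B. T = Sum A B \<longrightarrow> typing_iso D G P B) \<and> (\<forall>A. T = List A \<longrightarrow> typing_iso D G P (Prod A (List A)))"
  by (induct rule: typing_iso.induct) auto

lemma typing_iso_base_red: "typing_iso D G R T \<Longrightarrow> base_red R R' \<Longrightarrow> typing_iso D G R' T"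
proof (induct arbitrary: R' rule: typing_iso.induct)
  case (ti_app G M A B N)
  from ti_app.prems show ?case
  proof cases
    case (1 M0)
    with ti_app.hyps(1) have "typing_iso D (A # G) M0 B" by (auto dest: typing_iso_TLamD)
    with 1 ti_app.hyps(3) show ?thesis by (auto intro: typing_iso_subst0)
  next
    case 5
    with ti_app.hyps(1) obtain A' where "A = List A'" "B = Sum Unit (Prod A' (List A'))"
      by (auto dest: typing_iso_TSplitD)
    with 5 ti_app.hyps(3) show ?thesis by (auto intro: typing_iso.ti_unfold)
  qed
next
  case (ti_match G P A B M C N)
  from ti_match.prems show ?case
  proof cases
    case (6 Q)
    with typing_iso_injD(1)[OF ti_match.hyps(1)] have "typing_iso D G Q A" by simp
    with 6 ti_match.hyps(3) show ?thesis by (auto intro: typing_iso_subst0)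
  next
    case (7 Q)
    with typing_iso_injD(2)[OF ti_match.hyps(1)] have "typing_iso D G Q B" by simp
    with 7 ti_match.hyps(5) show ?thesis by (auto intro: typing_iso_subst0)
  qed
next
  case (ti_fold G M A)
  then show ?case by (blast intro: typing_iso.ti_fold)
next
  case (ti_unfold G M A)
  then show ?case by (blast intro: typing_iso.ti_unfold)
qed (auto elim!: base_red.cases dest: typing_iso_TPairD intro: typing_iso_syntax_directed)

lemma typing_iso_opD: "typing_iso D G t T \<Longrightarrow> t \<in> {TNot, TAnd, TXor} \<Longrightarrow> \<exists>A. T = Arr A Bit"
  by (induct rule: typing_iso.induct) auto

lemma typing_iso_bool_red: "typing_iso D G R T \<Longrightarrow> bool_red R R' \<Longrightarrow> typing_iso D G R' T"
proof (induct arbitrary: R' rule: typing_iso.induct)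
  case (ti_app G M A B N)
  from ti_app.prems obtain b where "M \<in> {TNot, TAnd, TXor}" "R' = bconst b"
    by cases auto
  with typing_iso_opD[OF ti_app.hyps(1)] show ?case by auto
next
  case (ti_if G P M C N)
  from ti_if.prems show ?case by cases (use ti_if.hyps in auto)
next
  case (ti_fold G M A)
  then show ?case by (blast intro: typing_iso.ti_fold)
next
  case (ti_unfold G M A)
  then show ?case by (blast intro: typing_iso.ti_unfold)
qed (erule bool_red.cases; simp)+

lemma typing_iso_plug:
  "typing_iso D G t T \<Longrightarrow> t = plug E R \<Longrightarrow> (\<And>G T. typing_iso D G R T \<Longrightarrow> typing_iso D G R' T) \<Longrightarrow>
    typing_iso D G (plug E R') T"
proof (induct arbitrary: E rule: typing_iso.induct)
  case (ti_fold G M A)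
  then show ?case by (blast intro: typing_iso.ti_fold)
next
  case (ti_unfold G M A)
  then show ?case by (blast intro: typing_iso.ti_unfold)
qed (case_tac E; simp; blast intro: typing_iso_syntax_directed)+

lemma typing_iso_steps: "step\<^sup>*\<^sup>* t t' \<Longrightarrow> typing_iso D G t T \<Longrightarrow> typing_iso D G t' T"
proof (induct rule: rtranclp_induct)
  case (step u u')
  from step.hyps(2) obtain E R R' where "u = plug E R" "u' = plug E R'" "base_red R R' \<or> bool_red R R'"
    by (cases rule: step.cases) auto
  moreover have "typing_iso D G' R T' \<Longrightarrow> typing_iso D G' R' T'" for G' T'
    using \<open>base_red R R' \<or> bool_red R R'\<close> typing_iso_base_red typing_iso_bool_red by blast
  ultimately show ?case using step.hyps(3) step.prems typing_iso_plug by blast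
qed

lemma typing_iso_tuple_bconst: "typing_iso D G (tuple (map bconst bs)) T \<Longrightarrow> T = bitpow (length bs)"
proof (induct bs arbitrary: T rule: induct_list012)
  case 1
  then show ?case by (auto dest: typing_iso_TSkipD)
next
  case (2 b)
  then show ?case using typing_iso_boolD by (cases b) (auto simp: bconst_def)
next
  case (3 b b' bs)
  from typing_iso_TPairD[OF 3(3)[simplified]] obtain A B where
    "T = Prod A B" "typing_iso D G (bconst b) A" "typing_iso D G (tuple (map bconst (b' # bs))) B"
    by auto
  moreover have "A = Bit" using \<open>typing_iso D G (bconst b) A\<close> typing_iso_boolD
    by (cases b) (auto simp: bconst_def)
  ultimately show ?case using 3(2) by simp
qed

lemma bitpow_inj: "bitpow a = bitpow b \<Longrightarrow> a = b"
  by (induct a arbitrary: b rule: bitpow.induct) (case_tac b rule: bitpow.cases; simp)+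

definition proj_lets :: "nat \<Rightarrow> nat list \<Rightarrow> trm \<Rightarrow> trm \<Rightarrow> trm" where
  "proj_lets n js T M = foldr (\<lambda>j acc. mklet j (proj n j T) acc) js M"

lemma let_tuple_proj_lets: "let_tuple n bs M = mklet 0 (tuple (map bconst bs)) (proj_lets n [1..<Suc n] (TFV 0) M)"
  by (simp add: let_tuple_def proj_lets_def)

lemma subst_close: "lift 0 s = s \<Longrightarrow> subst (close x d t) d s = subst_fv (TFV(x := s)) t"
  by (induct t arbitrary: d) auto

lemma mklet_steps: "lift 0 c = c \<Longrightarrow> step\<^sup>*\<^sup>* (mklet x c B) (subst_fv (TFV(x := c)) B)"
proof -
  assume "lift 0 c = c"
  have "base_red (TApp (TLam (close x 0 B)) c) (subst (close x 0 B) 0 c)" by (rule base_red.intros)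
  with \<open>lift 0 c = c\<close> show ?thesis
    unfolding mklet_def by (auto simp: subst_close intro: steps_redex[OF _ rtranclp.rtrancl_refl])
qed

lemma subst_fv_mklet:
  assumes "g x = TFV x" and "\<And>y d. y \<noteq> x \<Longrightarrow> close x d (g y) = g y"
  shows "subst_fv g (mklet x N B) = mklet x (subst_fv g N) (subst_fv g B)"
proof -
  have "subst_fv g (close x d t) = close x d (subst_fv g t)" for d t
    using assms by (induct t arbitrary: d) auto
  then show ?thesis by (simp add: mklet_def)
qed

lemma subst_fv_proj: "subst_fv g (proj n i z) = proj n i (subst_fv g z)"
proof -
  have "subst_fv g ((TSnd ^^ k) z) = (TSnd ^^ k) (subst_fv g z)" for k by (induct k) auto
  then show ?thesis by (simp add: proj_def)
qed

lemma subst_fv_proj_lets: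
  assumes "\<And>j. j \<in> set js \<Longrightarrow> g j = TFV j" and "\<And>y. y \<notin> set js \<Longrightarrow> g y = TFV y \<or> ground_value (g y)"
  shows "subst_fv g (proj_lets n js T M) = proj_lets n js (subst_fv g T) (subst_fv g M)"
  using assms
proof (induct js)
  case (Cons j js)
  have "close j d (g y) = g y" if "y \<noteq> j" for y d
    using Cons.prems(2)[of y] Cons.prems(1)[of y] that ground_value_closed(2) by (cases "y \<in> set js") auto
  moreover have "subst_fv g (proj_lets n js T M) = proj_lets n js (subst_fv g T) (subst_fv g M)"
    by (rule Cons.hyps) (use Cons.prems in auto)
  ultimately show ?case using Cons.prems(1) by (simp add: proj_lets_def subst_fv_mklet subst_fv_proj)
qed (simp add: proj_lets_def)

lemma snd_pow_tuple_steps: "k < length xs \<Longrightarrow> step\<^sup>*\<^sup>* ((TSnd ^^ k) (tuple xs)) (tuple (drop k xs))"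
proof (induct k)
  case (Suc k)
  have "drop k xs = xs ! k # drop (Suc k) xs" and "drop (Suc k) xs = xs ! Suc k # drop (Suc (Suc k)) xs"
    using Suc.prems by (simp_all add: Cons_nth_drop_Suc)
  then have "step\<^sup>*\<^sup>* (TSnd (tuple (drop k xs))) (tuple (drop (Suc k) xs))"
    by (metis base_red.intros(3) rtranclp.rtrancl_refl steps_redex tuple.simps(3))
  with Suc show ?case by (auto intro: rtranclp_trans steps_cong(5))
qed simp

lemma proj_tuple_steps:
  assumes "length xs = n" and "1 \<le> i" and "i \<le> n"
  shows "step\<^sup>*\<^sup>* (proj n i (tuple xs)) (xs ! (i - 1))"
proof (cases "i = n")
  case True
  have "drop (n - 1) xs = [xs ! (n - 1)]"
    using assms by (metis Cons_nth_drop_Suc One_nat_def Suc_pred diff_less drop_all le_refl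
        less_numeral_extra(1) order_less_le_trans)
  with True assms show ?thesis using snd_pow_tuple_steps[of "n - 1" xs] by (simp add: proj_def)
next
  case False
  then have "drop (i - 1) xs = xs ! (i - 1) # xs ! i # drop (Suc i) xs"
    using assms by (metis Cons_nth_drop_Suc Suc_pred' le_less_trans less_Suc_eq_le diff_less not_le
        le_neq_implies_less zero_less_one less_imp_diff_less)
  moreover have "step\<^sup>*\<^sup>* (TFst ((TSnd ^^ (i - 1)) (tuple xs))) (TFst (tuple (drop (i - 1) xs)))"
    using False assms by (intro steps_cong(4) snd_pow_tuple_steps) auto
  ultimately show ?thesis using False
    by (auto simp: proj_def intro: steps_redex base_red.intros)
qed

lemma proj_lets_steps:
  assumes "set js \<subseteq> {1..n}" and "distinct js" and "length bs = n"
  shows "step\<^sup>*\<^sup>* (proj_lets n js (tuple (map bconst bs)) M)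
    (subst_fv (\<lambda>x. if x \<in> set js then bconst (bs ! (x - 1)) else TFV x) M)"
  using assms(1,2)
proof (induct js arbitrary: M)
  case Nil
  then show ?case by (simp add: proj_lets_def subst_fv_TFV)
next
  case (Cons i js)
  let ?T = "tuple (map bconst bs)" and ?c = "bconst (bs ! (i - 1))"
  have "step\<^sup>*\<^sup>* (proj n i ?T) ?c"
    using proj_tuple_steps[of "map bconst bs" n i] Cons.prems assms(3) by simp
  then have first: "step\<^sup>*\<^sup>* (proj_lets n (i # js) ?T M) (mklet i ?c (proj_lets n js ?T M))"
    using steps_cong(2)[OF rtranclp.rtrancl_refl] by (simp add: proj_lets_def mklet_def)
  have "subst_fv (TFV(i := ?c)) (proj_lets n js ?T M)
      = proj_lets n js (subst_fv (TFV(i := ?c)) ?T) (subst_fv (TFV(i := ?c)) M)"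
    by (rule subst_fv_proj_lets) (use Cons.prems in auto)
  then have "subst_fv (TFV(i := ?c)) (proj_lets n js ?T M) = proj_lets n js ?T (subst_fv (TFV(i := ?c)) M)"
    by (simp only: ground_value_closed(3)[OF ground_value_tuple_bconst])
  with mklet_steps[of ?c i "proj_lets n js ?T M"] have second:
    "step\<^sup>*\<^sup>* (mklet i ?c (proj_lets n js ?T M)) (proj_lets n js ?T (subst_fv (TFV(i := ?c)) M))"
    by simp
  have "subst_fv (\<lambda>x. if x \<in> set js then bconst (bs ! (x - 1)) else TFV x) (subst_fv (TFV(i := ?c)) M)
      = subst_fv (\<lambda>x. if x \<in> set (i # js) then bconst (bs ! (x - 1)) else TFV x) M"
    unfolding subst_fv_subst_fv by (rule subst_fv_cong) simp
  with Cons.hyps[of "subst_fv (TFV(i := ?c)) M"] Cons.prems have third: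
    "step\<^sup>*\<^sup>* (proj_lets n js ?T (subst_fv (TFV(i := ?c)) M))
      (subst_fv (\<lambda>x. if x \<in> set (i # js) then bconst (bs ! (x - 1)) else TFV x) M)"
    by simp
  show ?case using rtranclp_trans[OF first rtranclp_trans[OF second third]] .
qed

lemma let_tuple_steps:
  assumes "length bs = n" and "0 \<notin> set (fvars M)"
  shows "step\<^sup>*\<^sup>* (let_tuple n bs M) (subst_fv (\<lambda>x. if x \<in> {1..n} then bconst (bs ! (x - 1)) else TFV x) M)"
proof -
  let ?T = "tuple (map bconst bs)" and ?js = "[1..<Suc n]"
  have ground_T: "ground_value ?T" by (rule ground_value_tuple_bconst)
  have "subst_fv (TFV(0 := ?T)) M = M" using assms(2) by (intro subst_fv_TFV) auto
  with ground_T have "subst_fv (TFV(0 := ?T)) (proj_lets n ?js (TFV 0) M) = proj_lets n ?js ?T M"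
    by (subst subst_fv_proj_lets) (auto simp: ground_value_closed)
  with mklet_steps[of ?T 0 "proj_lets n ?js (TFV 0) M"] ground_T
  have "step\<^sup>*\<^sup>* (let_tuple n bs M) (proj_lets n ?js ?T M)"
    by (simp add: let_tuple_proj_lets ground_value_closed)
  moreover have "step\<^sup>*\<^sup>* (proj_lets n ?js ?T M)
      (subst_fv (\<lambda>x. if x \<in> set ?js then bconst (bs ! (x - 1)) else TFV x) M)"
    using assms(1) by (intro proj_lets_steps) auto
  ultimately show ?thesis
    by (simp del: upt_Suc add: atLeastLessThanSuc_atLeastAtMost)
qed

definition input_subst :: "nat \<Rightarrow> (nat \<Rightarrow> bool) \<Rightarrow> nat \<Rightarrow> trm" where
  "input_subst n u x = (if x \<in> {1..n} then bconst (u x) else TFV x)"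

lemma let_tuple_steps_input_subst:
  assumes "set (fvars M) \<subseteq> {1..n}"
  shows "step\<^sup>*\<^sup>* (let_tuple n (map u [1..<Suc n]) M) (subst_fv (input_subst n u) M)"
proof -
  have "subst_fv (\<lambda>x. if x \<in> {1..n} then bconst (map u [1..<Suc n] ! (x - 1)) else TFV x) M
      = subst_fv (input_subst n u) M"
    by (rule subst_fv_cong) (auto simp: input_subst_def nth_map_upt simp del: upt_Suc)
  moreover have "0 \<notin> set (fvars M)" using assms by auto
  ultimately show ?thesis using let_tuple_steps[of "map u [1..<Suc n]" n M] by simp
qed

lemma shape_simps [simp]:
  "shape (TFV x) = TFV 0" "shape TSkip = TSkip" "shape (TPair M N) = TPair (shape M) (shape N)"
  "shape (TInj1 M) = TInj1 (shape M)" "shape (TInj2 M) = TInj2 (shape M)"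
  by (simp_all add: shape_def)

lemma length_fvars_shape: "shape U = shape V \<Longrightarrow> length (fvars U) = length (fvars V)"
proof -
  have "fvars (shape t) = map (\<lambda>_. 0) (fvars t)" for t
    unfolding shape_def by (induct t) auto
  then show "shape U = shape V \<Longrightarrow> ?thesis" by (metis length_map)
qed

lemma shape_eqD:
  "shape V = TFV x \<Longrightarrow> \<exists>y. V = TFV y"
  "shape V = TSkip \<Longrightarrow> V = TSkip"
  "shape V = TPair A B \<Longrightarrow> \<exists>V1 V2. V = TPair V1 V2 \<and> shape V1 = A \<and> shape V2 = B"
  "shape V = TInj1 A \<Longrightarrow> \<exists>V1. V = TInj1 V1 \<and> shape V1 = A"
  "shape V = TInj2 A \<Longrightarrow> \<exists>V1. V = TInj2 V1 \<and> shape V1 = A"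
  by (cases V; simp add: shape_def)+

lemma subst_fv_same_shape:
  "fo_term U \<Longrightarrow> shape U = shape V \<Longrightarrow> map f (fvars U) = map g (fvars V) \<Longrightarrow> subst_fv f U = subst_fv g V"
  "fo_list U \<Longrightarrow> shape U = shape V \<Longrightarrow> map f (fvars U) = map g (fvars V) \<Longrightarrow> subst_fv f U = subst_fv g V"
proof (induct arbitrary: V and V rule: fo_term_fo_list.inducts)
  case (1 x)
  then obtain y where "V = TFV y" using shape_eqD(1)[of V 0] by auto
  with 1 show ?case by simp
next
  case (2 U1 U2)
  from shape_eqD(3)[OF 2(5)[symmetric, simplified]] obtain V1 V2
    where V: "V = TPair V1 V2" and shapes: "shape U1 = shape V1" "shape U2 = shape V2"
    by auto
  with 2(6) length_fvars_shape[OF shapes(1)]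
  have "map f (fvars U1) = map g (fvars V1) \<and> map f (fvars U2) = map g (fvars V2)"
    by (simp add: append_eq_append_conv)
  with 2(2)[OF shapes(1)] 2(4)[OF shapes(2)] V show ?case by simp
next
  case 4
  from shape_eqD(4)[OF 4(1)[symmetric, simplified]] obtain V0 where "V = TInj1 V0" "shape V0 = TSkip"
    by auto
  then show ?case using shape_eqD(2)[of V0] by simp
next
  case (5 U1 U2)
  from shape_eqD(5)[OF 5(5)[symmetric, simplified]] obtain V0
    where "V = TInj2 V0" "shape V0 = TPair (shape U1) (shape U2)"
    by auto
  moreover from shape_eqD(3)[OF this(2)] obtain V1 V2
    where "V0 = TPair V1 V2" and shapes: "shape U1 = shape V1" "shape U2 = shape V2"
    by auto
  ultimately have V: "V = TInj2 (TPair V1 V2)" by simp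
  with 5(6) length_fvars_shape[OF shapes(1)]
  have "map f (fvars U1) = map g (fvars V1) \<and> map f (fvars U2) = map g (fvars V2)"
    by (simp add: append_eq_append_conv)
  with 5(2)[OF shapes(1)] 5(4)[OF shapes(2)] V show ?case by simp
qed

lemma run_circuit_Cons [simp]: "run_circuit I (g # C) u = exec_gate g (run_circuit I C u)"
  by (simp add: run_circuit_def)

lemma run_circuit_append: "run_circuit I (G @ C) u = foldr exec_gate G (run_circuit I C u)"
  by (simp add: run_circuit_def)

lemma run_circuit_new_wire: "new_wire I C L w \<Longrightarrow> run_circuit I C u w = False"
proof -
  have "w \<notin> I \<Longrightarrow> w \<notin> wires C \<Longrightarrow> run_circuit I C u w = False"
  proof (induct C)
    case (Cons g C)
    then show ?case by (cases g) (simp add: wires_def)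
  qed (simp add: run_circuit_def)
  then show "new_wire I C L w \<Longrightarrow> ?thesis" by (simp add: new_wire_def)
qed

lemma exec_if_gates:
  assumes "distinct (map fst trs)" and "p \<notin> fst ` set trs"
    and "\<And>a b c. (a, b, c) \<in> set trs \<Longrightarrow> b \<notin> fst ` set trs \<and> c \<notin> fst ` set trs"
  shows "foldr exec_gate (if_gates p trs) v x =
    (case map_of trs x of Some (b, c) \<Rightarrow> v x \<noteq> (if v p then v b else v c) | None \<Rightarrow> v x)"
  using assms
proof (induct trs arbitrary: x)
  case Nil
  then show ?case by (simp add: if_gates_def)
next
  case (Cons t trs)
  obtain a b c where t: "t = (a, b, c)" by (cases t)
  let ?v = "foldr exec_gate (if_gates p trs) v"
  have IH: "?v y = (case map_of trs y of Some (b, c) \<Rightarrow> v y \<noteq> (if v p then v b else v c) | None \<Rightarrow> v y)"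
    for y
  proof (rule Cons.hyps)
    show "distinct (map fst trs)" "p \<notin> fst ` set trs" using Cons.prems(1,2) by auto
    show "b' \<notin> fst ` set trs \<and> c' \<notin> fst ` set trs" if "(a', b', c') \<in> set trs" for a' b' c'
      using Cons.prems(3)[of a' b' c'] that by auto
  qed
  have untouched: "?v y = v y" if "y \<notin> fst ` set trs" for y
  proof -
    from that have "map_of trs y = None" by (simp add: map_of_eq_None_iff)
    with IH[of y] show ?thesis by simp
  qed
  have notin: "a \<notin> fst ` set trs" "p \<notin> fst ` set trs" "b \<notin> fst ` set trs" "c \<notin> fst ` set trs"
    and distinct_a: "p \<noteq> a" "b \<noteq> a" "c \<noteq> a"
    using Cons.prems(1,2) Cons.prems(3)[of a b c] t by auto
  then have unchanged: "?v a = v a" "?v p = v p" "?v b = v b" "?v c = v c"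
    by (simp_all add: untouched)
  show ?case
  proof (cases "x = a")
    case True
    with t distinct_a unchanged show ?thesis by (simp add: if_gates_def)
  next
    case False
    with t IH[of x] show ?thesis by (simp add: if_gates_def)
  qed
qed

lemma run_circuit_if_gates:
  assumes "distinct ws" and "length bs = length ws" and "length cs = length ws"
    and "set ws \<inter> insert p (set bs \<union> set cs) = {}"
    and "\<And>w. w \<in> set ws \<Longrightarrow> run_circuit I C u w = False"
  shows "y \<notin> set ws \<Longrightarrow> run_circuit I (if_gates p (zip ws (zip bs cs)) @ C) u y = run_circuit I C u y"
    and "j < length ws \<Longrightarrow> run_circuit I (if_gates p (zip ws (zip bs cs)) @ C) u (ws ! j) =
      (if run_circuit I C u p then run_circuit I C u (bs ! j) else run_circuit I C u (cs ! j))"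
proof -
  let ?trs = "zip ws (zip bs cs)"
  have fst_trs: "map fst ?trs = ws" using assms(2,3) by simp
  then have "fst ` set ?trs = set ws" by (metis set_map)
  moreover have "b \<in> set bs \<and> c \<in> set cs" if "(a, b, c) \<in> set ?trs" for a b c
    using that by (auto dest: set_zip_leftD set_zip_rightD)
  ultimately have run: "run_circuit I (if_gates p ?trs @ C) u x =
    (case map_of ?trs x of Some (b, c) \<Rightarrow> run_circuit I C u x \<noteq> (if run_circuit I C u p
       then run_circuit I C u b else run_circuit I C u c) | None \<Rightarrow> run_circuit I C u x)" for x
    unfolding run_circuit_append using assms(1,4) fst_trs by (subst exec_if_gates) auto
  show "run_circuit I (if_gates p ?trs @ C) u y = run_circuit I C u y" if "y \<notin> set ws"
  proof -
    from that \<open>fst ` set ?trs = set ws\<close> have "map_of ?trs y = None" by (simp add: map_of_eq_None_iff)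
    with run[of y] show ?thesis by simp
  qed
  assume "j < length ws"
  with assms(1-3) have "map_of ?trs (ws ! j) = Some (bs ! j, cs ! j)"
    by (simp add: map_of_zip_nth)
  with run[of "ws ! j"] assms(5)[of "ws ! j"] \<open>j < length ws\<close>
  show "run_circuit I (if_gates p ?trs @ C) u (ws ! j) =
      (if run_circuit I C u p then run_circuit I C u (bs ! j) else run_circuit I C u (cs ! j))"
    by simp
qed

section \<open>The readback simulates the machine\<close>

definition readback_env :: "nat set \<Rightarrow> gate list \<Rightarrow> (nat \<Rightarrow> nat option) \<Rightarrow> (nat \<Rightarrow> bool) \<Rightarrow> nat \<Rightarrow> trm" where
  "readback_env I C L u x = (case L x of Some w \<Rightarrow> bconst (run_circuit I C u w) | None \<Rightarrow> TFV x)"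

lemma readback_eq_subst_fv: "readback M I C L u = subst_fv (readback_env I C L u) M"
  by (simp add: readback_def readback_env_def [abs_def])

lemma readback_env_closed [simp]:
  "lift c (readback_env I C L u x) = readback_env I C L u x"
  "subst (readback_env I C L u x) k s = readback_env I C L u x"
  by (simp_all add: readback_env_def split: option.split)

lemma readback_plug:
  "readback (plug E X) I C L u =
    plug (ctx_subst_fv (readback_env I C L u) E) (subst_fv (readback_env I C L u) X)"
  by (simp add: readback_eq_subst_fv subst_fv_plug)

lemma readback_env_Some: "L x = Some w \<Longrightarrow> readback_env I C L u x = bconst (run_circuit I C u w)"
  by (simp add: readback_env_def)

definition readback_step :: "trm \<Rightarrow> trm \<Rightarrow> bool" where
  "readback_step a a' \<longleftrightarrow> a = a'
     \<or> (\<exists>E R R'. a = plug E R \<and> a' = plug E R' \<and> (base_red R R' \<or> bool_red R R'))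
     \<or> (\<exists>E X. a = plug E X \<and> a' = plug E TErr)"

lemma approx_redex:
  "base_red R R' \<or> bool_red R R' \<Longrightarrow> approx R Y \<Longrightarrow> \<exists>Y'. step\<^sup>*\<^sup>* Y Y' \<and> approx R' Y'"
proof (elim disjE)
  assume "base_red R R'" "approx R Y"
  then have "\<exists>Y'. base_red Y Y' \<and> approx R' Y'"
    by (induct rule: base_red.induct) (auto elim!: approxE intro: base_red.intros approx_subst approx.intros)
  then show ?thesis by (auto intro: steps_redex)
next
  assume "bool_red R R'" "approx R Y"
  then have "\<exists>Y'. bool_red Y Y' \<and> approx R' Y'"
    by (induct rule: bool_red.induct)
      (auto elim!: approxE dest!: approx_ground_value[OF _ ground_value_bconst] intro: bool_red.intros)
  then show ?thesis by (auto intro: steps_redex)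
qed

lemma approx_readback_step:
  assumes "readback_step a a'" and "approx a r"
  shows "\<exists>r'. step\<^sup>*\<^sup>* r r' \<and> approx a' r'"
  using assms approx_plug approx_redex approx_TErr unfolding readback_step_def by blast

lemma base_red_subst_fv:
  "base_red R R' \<Longrightarrow> (\<And>x c. lift c (f x) = f x) \<Longrightarrow> (\<And>x k s. subst (f x) k s = f x) \<Longrightarrow>
    base_red (subst_fv f R) (subst_fv f R')"
  by (induct rule: base_red.induct) (auto simp: subst_fv_subst intro: base_red.intros)

lemma fvars_base_red: "base_red R R' \<Longrightarrow> set (fvars R') \<subseteq> set (fvars R)"
  by (induct rule: base_red.induct) (use fvars_subst in fastforce)+

lemma readback_env_agree:
  assumes "\<And>x. x \<in> dom L \<Longrightarrow> L' x = L x" and "\<And>y. y \<in> ran L \<Longrightarrow> run_circuit I C' u y = run_circuit I C u y"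
    and "set (fvars (plug E X)) \<subseteq> dom L"
  shows "ctx_subst_fv (readback_env I C' L' u) E = ctx_subst_fv (readback_env I C L u) E"
proof (rule ctx_subst_fv_cong)
  fix x assume "x \<in> set (fvars (plug E X))"
  with assms(3) obtain w where "L x = Some w" by auto
  moreover from this have "w \<in> ran L" by (auto simp: ran_def)
  ultimately show "readback_env I C' L' u x = readback_env I C L u x"
    using assms(1)[of x] assms(2)[of w] by (simp add: readback_env_def domI)
qed

text \<open>Common core of the rules for \<open>ff\<close>, \<open>tt\<close>, \<open>not\<close>, \<open>and\<close>, \<open>xor\<close>, which bind a fresh
  variable \<open>p\<close> to a fresh wire \<open>w\<close>.\<close>
lemma readback_step_fresh_var:
  assumes "new_wire I C L w" and "L p = None" and "set (fvars (plug E X)) \<subseteq> dom L"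
    and "\<And>y. y \<noteq> w \<Longrightarrow> run_circuit I C' u y = run_circuit I C u y"
    and "subst_fv (readback_env I C L u) X = bconst (run_circuit I C' u w) \<or>
      bool_red (subst_fv (readback_env I C L u) X) (bconst (run_circuit I C' u w))"
  shows "set (fvars (plug E (TFV p))) \<subseteq> dom (L(p \<mapsto> w))"
    and "readback_step (readback (plug E X) I C L u) (readback (plug E (TFV p)) I C' (L(p \<mapsto> w)) u)"
proof -
  show "set (fvars (plug E (TFV p))) \<subseteq> dom (L(p \<mapsto> w))"
    using assms(3) fvars_plug[of E X] fvars_plug[of E "TFV p"] by auto
  have "w \<notin> ran L" using assms(1) by (simp add: new_wire_def)
  with assms(4) have "\<And>y. y \<in> ran L \<Longrightarrow> run_circuit I C' u y = run_circuit I C u y" by metis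
  with assms(2,3) have "ctx_subst_fv (readback_env I C' (L(p \<mapsto> w)) u) E = ctx_subst_fv (readback_env I C L u) E"
    by (intro readback_env_agree) auto
  with assms(5) show "readback_step (readback (plug E X) I C L u) (readback (plug E (TFV p)) I C' (L(p \<mapsto> w)) u)"
    unfolding readback_step_def readback_plug by (auto simp: readback_env_def)
qed

lemma ran_map_the_subset: "set xs \<subseteq> dom L \<Longrightarrow> set (map (the \<circ> L) xs) \<subseteq> ran L"
  by (auto simp: ran_def) (metis domD in_mono option.sel)

lemma readback_env_if_rule:
  assumes Lp: "L p = Some wp" and dom: "set (fvars V) \<subseteq> dom L" "set (fvars W) \<subseteq> dom L"
    and len: "length (fvars V) = length ws" "length (fvars W) = length ws" "length (fvars U) = length ws"
    and U: "distinct (fvars U)" "\<forall>x \<in> set (fvars U). L x = None"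
    and ws: "distinct ws" "\<forall>w \<in> set ws. new_wire I C L w"
  defines "C' \<equiv> if_gates wp (zip ws (zip (map (the \<circ> L) (fvars V)) (map (the \<circ> L) (fvars W)))) @ C"
    and "L' \<equiv> L ++ map_of (zip (fvars U) ws)"
  shows "x \<in> dom L \<Longrightarrow> readback_env I C' L' u x = readback_env I C L u x"
    and "j < length ws \<Longrightarrow> readback_env I C' L' u (fvars U ! j) =
      bconst (if run_circuit I C u wp then run_circuit I C u (the (L (fvars V ! j)))
              else run_circuit I C u (the (L (fvars W ! j))))"
proof -
  let ?BV = "map (the \<circ> L) (fvars V)" and ?BW = "map (the \<circ> L) (fvars W)"
  have "wp \<in> ran L" using Lp by (rule ranI)
  moreover have ws_fresh: "set ws \<inter> ran L = {}" using ws(2) by (auto simp: new_wire_def)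
  moreover have "set ?BV \<subseteq> ran L" "set ?BW \<subseteq> ran L"
    using dom ran_map_the_subset by blast+
  ultimately have disj: "set ws \<inter> insert wp (set ?BV \<union> set ?BW) = {}" by blast
  have fresh: "run_circuit I C u w = False" if "w \<in> set ws" for w
    using that ws(2) run_circuit_new_wire by blast
  have len_BV: "length ?BV = length ws" "length ?BW = length ws" using len by simp_all
  note run' = run_circuit_if_gates[OF ws(1) len_BV disj fresh, folded C'_def]
  show "readback_env I C' L' u x = readback_env I C L u x" if "x \<in> dom L"
  proof -
    from that obtain w where w: "L x = Some w" by auto
    from that U(2) have "x \<notin> set (fvars U)" by auto
    with len(3) have "map_of (zip (fvars U) ws) x = None" by simp
    then have "L' x = L x" by (simp add: L'_def map_add_def)
    moreover from w ws_fresh have "w \<notin> set ws" by (auto intro: ranI)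
    ultimately show ?thesis using w run'(1) by (simp add: readback_env_Some)
  qed
  show "readback_env I C' L' u (fvars U ! j) =
      bconst (if run_circuit I C u wp then run_circuit I C u (the (L (fvars V ! j)))
              else run_circuit I C u (the (L (fvars W ! j))))" if "j < length ws"
  proof -
    have "L' (fvars U ! j) = Some (ws ! j)"
      using that len(3) U(1) by (simp add: L'_def map_of_zip_nth)
    with that len run'(2)[of j] show ?thesis by (simp add: readback_env_Some)
  qed
qed

lemma readback_step_if:
  assumes Lp: "L p = Some wp" and V: "fo_ext L V" and W: "fo_ext L W" and VW: "same_shape V W"
    and U: "fo_term U" "same_shape U V" "distinct (fvars U)" "\<forall>x \<in> set (fvars U). L x = None"
    and ws: "length ws = length (fvars U)" "distinct ws" "\<forall>w \<in> set ws. new_wire I C L w"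
    and fv: "set (fvars (plug E (TIf (TFV p) V W))) \<subseteq> dom L"
  defines "C' \<equiv> if_gates wp (zip ws (zip (map (the \<circ> L) (fvars V)) (map (the \<circ> L) (fvars W)))) @ C"
    and "L' \<equiv> L ++ map_of (zip (fvars U) ws)"
  shows "set (fvars (plug E U)) \<subseteq> dom L'"
    and "readback_step (readback (plug E (TIf (TFV p) V W)) I C L u) (readback (plug E U) I C' L' u)"
proof -
  let ?v = "run_circuit I C u" and ?env = "readback_env I C L u" and ?env' = "readback_env I C' L' u"
  have len: "length (fvars V) = length ws" "length (fvars W) = length ws"
    using length_fvars_shape[of U V] length_fvars_shape[of V W] U(2) VW ws(1)
    by (simp_all add: same_shape_def)
  have dom: "set (fvars V) \<subseteq> dom L" "set (fvars W) \<subseteq> dom L"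
    using V W by (simp_all add: fo_ext_def)
  note env' = readback_env_if_rule[OF Lp dom len ws(1)[symmetric] U(3,4) ws(2,3), where u = u,
      folded C'_def L'_def]
  show "set (fvars (plug E U)) \<subseteq> dom L'"
    using fv fvars_plug[of E "TIf (TFV p) V W"] fvars_plug[of E U] ws(1) by (auto simp: L'_def)
  have ctx: "ctx_subst_fv ?env' E = ctx_subst_fv ?env E"
    using fv env'(1) by (intro ctx_subst_fv_cong) auto
  have env_V: "?env (fvars V ! j) = bconst (?v (the (L (fvars V ! j))))" if "j < length (fvars V)" for j
    using that dom(1) nth_mem by (fastforce simp: readback_env_Some)
  have env_W: "?env (fvars W ! j) = bconst (?v (the (L (fvars W ! j))))" if "j < length (fvars W)" for j
    using that dom(2) nth_mem by (fastforce simp: readback_env_Some)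
  have "subst_fv ?env' U = (if ?v wp then subst_fv ?env V else subst_fv ?env W)"
  proof (cases "?v wp")
    case True
    have "map ?env' (fvars U) = map ?env (fvars V)"
      using True len ws(1) env'(2) env_V by (intro nth_equalityI) auto
    with True U show ?thesis by (simp add: same_shape_def subst_fv_same_shape)
  next
    case False
    have "map ?env' (fvars U) = map ?env (fvars W)"
      using False len ws(1) env'(2) env_W by (intro nth_equalityI) auto
    with False U VW show ?thesis by (simp add: same_shape_def subst_fv_same_shape)
  qed
  moreover have "?env p = bconst (?v wp)" using Lp by (rule readback_env_Some)
  ultimately have "bool_red (subst_fv ?env (TIf (TFV p) V W)) (subst_fv ?env' U)"
    by (cases "?v wp") (auto simp: bconst_def intro: bool_red.intros)
  with ctx show "readback_step (readback (plug E (TIf (TFV p) V W)) I C L u) (readback (plug E U) I C' L' u)"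
    unfolding readback_step_def readback_plug by metis
qed

lemma am_step_readback:
  assumes "am_step (t, (I, C), L) (t', (I', C'), L')" and "set (fvars t) \<subseteq> dom L"
  shows "I' = I \<and> set (fvars t') \<subseteq> dom L' \<and> readback_step (readback t I C L u) (readback t' I' C' L' u)"
  using assms(1)
proof cases
  case (am_base R R' E)
  with assms(2) have "set (fvars t') \<subseteq> dom L"
    using fvars_plug[of E R] fvars_plug[of E R'] fvars_base_red by blast
  moreover have "base_red (subst_fv (readback_env I C L u) R) (subst_fv (readback_env I C L u) R')"
    using \<open>base_red R R'\<close> by (rule base_red_subst_fv) simp_all
  ultimately show ?thesis using am_base unfolding readback_step_def by (simp add: readback_plug) blast
next
  case (am_ff w p E)
  with assms(2) show ?thesis
    using readback_step_fresh_var[of I C L w p E Ff C' u] by (auto simp: run_circuit_new_wire bconst_def)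
next
  case (am_tt w p E)
  with assms(2) show ?thesis
    using readback_step_fresh_var[of I C L w p E Tt C' u] by (auto simp: run_circuit_new_wire bconst_def)
next
  case (am_not w p x wx E)
  have "wx \<noteq> w" using am_not by (auto simp: new_wire_def ran_def)
  with am_not assms(2) show ?thesis
    using readback_step_fresh_var[of I C L w p E "TApp TNot (TFV x)" C' u]
    by (auto simp: run_circuit_new_wire readback_env_Some intro: bool_red.intros)
next
  case (am_and w p x wx y wy E)
  with assms(2) show ?thesis
    using readback_step_fresh_var[of I C L w p E "TApp TAnd (TPair (TFV x) (TFV y))" C' u]
    by (auto simp: run_circuit_new_wire readback_env_Some intro: bool_red.intros)
next
  case (am_xor w p x wx y wy E)
  have "wx \<noteq> w" using am_xor by (auto simp: new_wire_def ran_def)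
  moreover have "bool_red (TApp TXor (TPair (bconst a) (bconst b))) (bconst (b = (\<not> a)))" for a b
    using bool_red.intros(5)[where a = a and b = b] by (cases a; cases b) simp_all
  ultimately show ?thesis using am_xor assms(2)
    using readback_step_fresh_var[of I C L w p E "TApp TXor (TPair (TFV x) (TFV y))" C' u]
    by (auto simp: run_circuit_new_wire readback_env_Some)
next
  case (am_if p wp V W U ws E)
  with assms(2) show ?thesis using readback_step_if[of L p wp V W U ws I C E] by auto
next
  case (am_err p V W E)
  have "readback_step (readback t I C L u) (readback t' I' C' L' u)"
    using am_err unfolding readback_step_def by (simp add: readback_plug) blast
  with am_err assms(2) show ?thesis using fvars_plug[of E "TIf (TFV p) V W"] fvars_plug[of E TErr] by auto
qed

lemma readback_EmptyAM:
  "EmptyAM n M = (t, (I, C), L) \<Longrightarrow> readback t I C L u = subst_fv (input_subst n u) M"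
proof -
  assume "EmptyAM n M = (t, (I, C), L)"
  then have "t = M" "I = {1..n}" "C = []" "L = (\<lambda>x. if x \<in> {1..n} then Some x else None)"
    by (auto simp: EmptyAM_def)
  moreover from this have "readback_env I C L u = input_subst n u"
    by (auto simp: fun_eq_iff readback_env_def input_subst_def run_circuit_def)
  ultimately show ?thesis by (simp add: readback_eq_subst_fv)
qed

lemma am_steps_readback:
  assumes "am_step\<^sup>*\<^sup>* (EmptyAM n M) (t, (I, C), L)" and "set (fvars M) \<subseteq> {1..n}"
  shows "I = {1..n} \<and> set (fvars t) \<subseteq> dom L \<and>
    (\<exists>r. step\<^sup>*\<^sup>* (subst_fv (input_subst n u) M) r \<and> approx (readback t I C L u) r)"
  using assms(1)
proof (induct "(t, (I, C), L)" arbitrary: t I C L rule: rtranclp_induct)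
  case base
  moreover from base have "I = {1..n}" "dom L = {1..n}" "t = M"
    by (auto simp: EmptyAM_def split: if_splits)
  ultimately show ?case using assms(2) readback_EmptyAM[OF base, of u] by auto
next
  case (step s t' I' C' L')
  obtain t I C L where s: "s = (t, (I, C), L)" by (cases s) auto
  with step.hyps(3) obtain r where "I = {1..n}" "set (fvars t) \<subseteq> dom L"
    "step\<^sup>*\<^sup>* (subst_fv (input_subst n u) M) r" "approx (readback t I C L u) r"
    by auto
  moreover note am_step_readback[OF step.hyps(2)[unfolded s] \<open>set (fvars t) \<subseteq> dom L\<close>, of u]
  ultimately show ?case by (blast dest: approx_readback_step intro: rtranclp_trans)
qed

lemma readback_output:
  "set ps \<subseteq> dom L \<Longrightarrow>
    readback (tuple (map TFV ps)) I C L u = tuple (map bconst (map (\<lambda>p. run_circuit I C u (the (L p))) ps))"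
  by (induct ps rule: induct_list012) (auto simp: readback_eq_subst_fv readback_env_def)

lemma fvars_tuple_TFV: "set (fvars (tuple (map TFV ps))) = set ps"
  by (induct ps rule: induct_list012) auto

lemma am_steps_output:
  fixes u :: "nat \<Rightarrow> bool"
  assumes "am_step\<^sup>*\<^sup>* (EmptyAM n M) (tuple (map TFV ps), (I, C), L)" and "set (fvars M) \<subseteq> {1..n}"
  defines "bs \<equiv> map (\<lambda>p. run_circuit I C u (the (L p))) ps"
  shows "readback (tuple (map TFV ps)) I C L u = tuple (map bconst bs)"
    and "step\<^sup>*\<^sup>* (subst_fv (input_subst n u) M) (tuple (map bconst bs))"
proof -
  from am_steps_readback[OF assms(1,2), of u] obtain r where
    "set ps \<subseteq> dom L" "step\<^sup>*\<^sup>* (subst_fv (input_subst n u) M) r"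
    "approx (readback (tuple (map TFV ps)) I C L u) r"
    by (auto simp: fvars_tuple_TFV)
  moreover from \<open>set ps \<subseteq> dom L\<close> show "readback (tuple (map TFV ps)) I C L u = tuple (map bconst bs)"
    unfolding bs_def by (rule readback_output)
  ultimately show "step\<^sup>*\<^sup>* (subst_fv (input_subst n u) M) (tuple (map bconst bs))"
    using approx_ground_value ground_value_tuple_bconst by metis
qed

lemma typing_bit_ctx_fvars: "typing (bit_ctx n) [] M T \<Longrightarrow> set (fvars M) \<subseteq> {1..n}"
proof -
  have "typing D G M T \<Longrightarrow> set (fvars M) \<subseteq> dom D" for D G
    by (induct rule: typing.induct) auto
  moreover have "dom (bit_ctx n) = {1..n}" by (auto simp: bit_ctx_def split: if_splits)
  ultimately show "typing (bit_ctx n) [] M T \<Longrightarrow> ?thesis" by blast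
qed

lemma typing_input_subst:
  "typing (bit_ctx n) [] M T \<Longrightarrow> typing_iso (bit_ctx n) [] (subst_fv (input_subst n u) M) T"
  by (erule typing_subst_fv) (auto simp: input_subst_def bit_ctx_def split: if_splits)

theorem theorem4:
  fixes M :: trm and n m :: nat and ps :: "nat list"
    and I :: "nat set" and C :: "gate list" and L :: "nat \<Rightarrow> nat option"
  assumes "typing (bit_ctx n) [] M (bitpow m)"
    and "am_step\<^sup>*\<^sup>* (EmptyAM n M) (tuple (map TFV ps), (I, C), L)"
  shows "length ps = m \<and>
    (\<forall>(u :: nat \<Rightarrow> bool) (cs :: bool list). length cs = m \<longrightarrow>
       (readback (tuple (map TFV ps)) I C L u = tuple (map bconst cs)
        \<longleftrightarrow> step\<^sup>*\<^sup>* (let_tuple n (map u [1..<Suc n]) M) (tuple (map bconst cs))))"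
proof -
  have fvars_M: "set (fvars M) \<subseteq> {1..n}" using assms(1) by (rule typing_bit_ctx_fvars)
  define bs where "bs u = map (\<lambda>p. run_circuit I C u (the (L p))) ps" for u
  note readback = am_steps_output(1)[OF assms(2) fvars_M, folded bs_def]
  have eval: "step\<^sup>*\<^sup>* (let_tuple n (map u [1..<Suc n]) M) (tuple (map bconst (bs u)))" for u
    using let_tuple_steps_input_subst[OF fvars_M] am_steps_output(2)[OF assms(2) fvars_M]
    unfolding bs_def by (rule rtranclp_trans)
  have "typing_iso (bit_ctx n) [] (tuple (map bconst (bs u))) (bitpow m)" for u
    using typing_iso_steps[OF am_steps_output(2)[OF assms(2) fvars_M, folded bs_def]
        typing_input_subst[OF assms(1)]] .
  then have "bitpow m = bitpow (length ps)" by (metis typing_iso_tuple_bconst length_map bs_def)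
  moreover have "readback (tuple (map TFV ps)) I C L u = tuple (map bconst cs)
      \<longleftrightarrow> step\<^sup>*\<^sup>* (let_tuple n (map u [1..<Suc n]) M) (tuple (map bconst cs))" for u cs
    using eval steps_ground_value_unique[OF eval] ground_value_tuple_bconst unfolding readback by metis
  ultimately show ?thesis by (auto dest: bitpow_inj)
qed

end
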